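(* Assume the standing model assumptions below. There exists a constant $C_0>0$, depending only on $d$, $C_V$, $\|\Psi\|$, $\|F\|$, $C_F$, $\sup_k m_k^{-1}$ and $\sup_k \nu_k$ (in particular independent of $f,g,X,Y,\Lambda,t$), with the following property. Let $X,Y\subset\Gamma$ be finite with $\mathrm{dist}(X,Y):=\min_{x\in X,y\in Y}\rho(x,y)>0$, let $\Lambda\subset\Gamma$ be finite with $X\cup Y\subset\Lambda$, and let $f_0\in C_b^1(\Omega_X)$, $g_0\in C^1_b(\Omega_Y)$, $f:=f_0\circ\pi_{X,\Lambda}$, $g:=g_0\circ\pi_{Y,\Lambda}$. Then for all $t\in\mathbb R$, $$\|\{\alpha^t_\Lambda(f),g\}\|_\infty\le 4\,\|f\|_{C^1}\|g\|_{C^1}\,\sqrt{C_0}\,\sinh(\sqrt{C_0}|t|)\,D(X,Y),$$ and in particular $$\|\{\alpha^t_\Lambda(f),g\}\|_\infty\le 4\,\|f\|_{C^1}\|g\|_{C^1}\,\sqrt{C_0}\,\big(e^{\sqrt{C_0}|t|}-1\big)\,D(X,Y),$$ where $D(X,Y):=\sum_{x\in X}\sum_{y\in Y}F(\rho(x,y))$.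
   Context: Standing model assumptions. Fix an integer $d\ge1$. $\Gamma$ is a countable set with a metric $\rho$. $F:[0,\infty)\to(0,\infty)$ is non-increasing with $F(0)=1$, $\|F\|:=\sup_{y\in\Gamma}\sum_{x\in\Gamma}F(\rho(x,y))<\infty$, and there is $C_F>0$ with $\sum_{z\in\Gamma}F(\rho(x,z))F(\rho(z,y))\le C_F F(\rho(x,y))$ for all $x,y\in\Gamma$. For each $k\in\Gamma$ there are a mass $m_k>0$ and a force constant $\nu_k>0$ with $0<\inf_k m_k^{-1}\le\sup_k m_k^{-1}<\infty$ and $0<\inf_k\nu_k\le\sup_k\nu_k<\infty$. For $k,l\in\Gamma$, $V_{kl}:\mathbb R^d\to\mathbb R$ is smooth, $V_{kl}(x)=V_{lk}(-x)$, $V_{kk}=0$, and there are constants $C_V\ge0$, $C_{kl}>0$ with $\|\partial^\beta V_{kl}\|_\infty\le C_{kl}C_V^{|\beta|}$ for every multi-index $\beta$; moreover $\|\Psi\|:=\sup_{k,l\in\Gamma}C_{kl}/F(\rho(k,l))<\infty$. For finite $\Lambda\subset\Gamma$, $\Omega_\Lambda$ is the space of pairs $(p,q)=((p_k)_{k\in\Lambda},(q_k)_{k\in\Lambda})$ with $p_k,q_k\in\mathbb R^d$, i.e. $\Omega_\Lambda\cong\mathbb R^{2|\Lambda|d}$ with Euclidean norm $\|\cdot\|_2$. The local Hamiltonian is $H_\Lambda(p,q)=\sum_{k\in\Lambda}\big(\frac{\|p_k\|^2}{2m_k}+\frac{\nu_k\|q_k\|^2}{2}\big)+\frac12\sum_{k,l\in\Lambda}V_{kl}(q_k-q_l)$;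 its Hamiltonian flow $\Phi^\Lambda_t:\Omega_\Lambda\to\Omega_\Lambda$ is globally defined, and $\alpha^t_\Lambda(h):=h\circ\Phi^\Lambda_t$. For $X\subset\Lambda$, $\Omega_X\subset\Omega_\Lambda$ (entries outside $X$ zero) and $\pi_{X,\Lambda}:\Omega_\Lambda\to\Omega_X$ is the orthogonal projection. $C_b^1(\Omega_X)$ denotes bounded $C^1$ functions with bounded gradient; $\|h\|_{C^1}:=\|h\|_\infty+\sup_{(p,q)}\|\nabla h(p,q)\|_2$. The Poisson bracket on $\Omega_\Lambda$ is $\{h_1,h_2\}=\sum_{j\in\Lambda}\sum_{i=1}^d\big(\frac{\partial h_1}{\partial q_{j,i}}\frac{\partial h_2}{\partial p_{j,i}}-\frac{\partial h_1}{\partial p_{j,i}}\frac{\partial h_2}{\partial q_{j,i}}\big)$. *)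

theory Defs
  imports "HOL-Analysis.Analysis"
begin

text \<open>Phase space points: pairs (p,q) of configurations nat => R^d.
  The countable set Gamma is modelled as a subset of nat.\<close>

type_synonym 'd phase = "(nat \<Rightarrow> real^'d) \<times> (nat \<Rightarrow> real^'d)"

definition Omega :: "nat set \<Rightarrow> 'd::finite phase set" where
  "Omega L = {z. \<forall>k. k \<notin> L \<longrightarrow> fst z k = 0 \<and> snd z k = 0}"

definition proj :: "nat set \<Rightarrow> 'd::finite phase \<Rightarrow> 'd phase" where
  "proj X z = ((\<lambda>k. if k \<in> X then fst z k else 0), (\<lambda>k. if k \<in> X then snd z k else 0))"

definition omega_dist :: "nat set \<Rightarrow> 'd::finite phase \<Rightarrow> 'd phase \<Rightarrow> real" where
  "omega_dist L z w = sqrt (\<Sum>k\<in>L. (norm (fst z k - fst w k))\<^sup>2 + (norm (snd z k - snd w k))\<^sup>2)"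

definition dq :: "('d::finite phase \<Rightarrow> real) \<Rightarrow> nat \<Rightarrow> 'd \<Rightarrow> 'd phase \<Rightarrow> real" where
  "dq h j i z = deriv (\<lambda>s. h (fst z, (snd z)(j := snd z j + s *\<^sub>R axis i 1))) 0"

definition dp :: "('d::finite phase \<Rightarrow> real) \<Rightarrow> nat \<Rightarrow> 'd \<Rightarrow> 'd phase \<Rightarrow> real" where
  "dp h j i z = deriv (\<lambda>s. h ((fst z)(j := fst z j + s *\<^sub>R axis i 1), snd z)) 0"

definition continuous_Omega :: "nat set \<Rightarrow> ('d::finite phase \<Rightarrow> real) \<Rightarrow> bool" where
  "continuous_Omega L g \<longleftrightarrow> (\<forall>z\<in>Omega L. \<forall>e>0. \<exists>\<delta>>0. \<forall>w\<in>Omega L.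
      omega_dist L w z < \<delta> \<longrightarrow> \<bar>g w - g z\<bar> < e)"

definition C1_Omega :: "nat set \<Rightarrow> ('d::finite phase \<Rightarrow> real) \<Rightarrow> bool" where
  "C1_Omega L h \<longleftrightarrow> continuous_Omega L h \<and>
     (\<forall>z\<in>Omega L. \<forall>j\<in>L. \<forall>i.
        (\<lambda>s. h (fst z, (snd z)(j := snd z j + s *\<^sub>R axis i 1))) differentiable (at 0) \<and>
        (\<lambda>s. h ((fst z)(j := fst z j + s *\<^sub>R axis i 1), snd z)) differentiable (at 0)) \<and>
     (\<forall>j\<in>L. \<forall>i. continuous_Omega L (dq h j i) \<and> continuous_Omega L (dp h j i))"

definition grad_norm :: "nat set \<Rightarrow> ('d::finite phase \<Rightarrow> real) \<Rightarrow> 'd phase \<Rightarrow> real" where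
  "grad_norm L h z = sqrt (\<Sum>j\<in>L. \<Sum>i\<in>UNIV. (dq h j i z)\<^sup>2 + (dp h j i z)\<^sup>2)"

definition C1b_Omega :: "nat set \<Rightarrow> ('d::finite phase \<Rightarrow> real) \<Rightarrow> bool" where
  "C1b_Omega L h \<longleftrightarrow> C1_Omega L h \<and> bdd_above ((\<lambda>z. \<bar>h z\<bar>) ` Omega L)
      \<and> bdd_above (grad_norm L h ` Omega L)"

definition C1_norm :: "nat set \<Rightarrow> ('d::finite phase \<Rightarrow> real) \<Rightarrow> real" where
  "C1_norm L h = (SUP z\<in>Omega L. \<bar>h z\<bar>) + (SUP z\<in>Omega L. grad_norm L h z)"

definition poisson :: "nat set \<Rightarrow> ('d::finite phase \<Rightarrow> real) \<Rightarrow> ('d phase \<Rightarrow> real) \<Rightarrow> 'd phase \<Rightarrow> real" where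
  "poisson L h1 h2 z = (\<Sum>j\<in>L. \<Sum>i\<in>UNIV. dq h1 j i z * dp h2 j i z - dp h1 j i z * dq h2 j i z)"

definition hamiltonian :: "nat set \<Rightarrow> (nat \<Rightarrow> real) \<Rightarrow> (nat \<Rightarrow> real)
    \<Rightarrow> (nat \<Rightarrow> nat \<Rightarrow> real^'d \<Rightarrow> real) \<Rightarrow> 'd::finite phase \<Rightarrow> real" where
  "hamiltonian L m \<nu> V z = (\<Sum>k\<in>L. (norm (fst z k))\<^sup>2 / (2 * m k) + \<nu> k * (norm (snd z k))\<^sup>2 / 2)
     + 1/2 * (\<Sum>k\<in>L. \<Sum>l\<in>L. V k l (snd z k - snd z l))"

definition is_ham_flow :: "nat set \<Rightarrow> ('d::finite phase \<Rightarrow> real) \<Rightarrow> (real \<Rightarrow> 'd phase \<Rightarrow> 'd phase) \<Rightarrow> bool" where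
  "is_ham_flow L H \<Phi> \<longleftrightarrow> (\<forall>z\<in>Omega L. \<Phi> 0 z = z \<and> (\<forall>t. \<Phi> t z \<in> Omega L) \<and>
     (\<forall>t. \<forall>k\<in>L.
        ((\<lambda>s. snd (\<Phi> s z) k) has_vector_derivative (\<chi> i. dp H k i (\<Phi> t z))) (at t) \<and>
        ((\<lambda>s. fst (\<Phi> s z) k) has_vector_derivative (\<chi> i. - dq H k i (\<Phi> t z))) (at t)))"

fun partial_iter :: "'d::finite list \<Rightarrow> (real^'d \<Rightarrow> real) \<Rightarrow> real^'d \<Rightarrow> real" where
  "partial_iter [] f = f"
| "partial_iter (i # is) f = (\<lambda>x. deriv (\<lambda>s. partial_iter is f (x + s *\<^sub>R axis i 1)) 0)"

definition smooth_fun :: "(real^'d::finite \<Rightarrow> real) \<Rightarrow> bool" where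
  "smooth_fun f \<longleftrightarrow> (\<forall>\<beta>. continuous_on UNIV (partial_iter \<beta> f) \<and>
      (\<forall>i x. (\<lambda>s. partial_iter \<beta> f (x + s *\<^sub>R axis i 1)) differentiable (at 0)))"

end

theory Submission
  imports Defs
begin

(* A perturbation of the initial data at a site y spreads under the flow at most like the kernel
   of the linear system u' = kappa F u, where kappa F(rho(k,l)) dominates the site-to-site
   Lipschitz constants of the Hamiltonian vector field.  By the convolution bound
   sum_z F F <= C_F F this kernel is at most delta_ky + (exp (kappa C_F |t|) - 1) / C_F F(rho(k,y)),
   and a comparison argument at the first time of touching turns this into a bound on differences
   of trajectories.  Linearising grad V uniformly on the compact set swept out by the trajectory
   shows that the difference quotients of the flow are Cauchy, so the flow is differentiable in
   the initial data with the same bound.  As X and Y are disjoint, the derivatives of f o Phi_t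
   in the coordinates of a site y in Y are then at most
   2 d ||f||_C1 sum_{x in X} (exp (kappa C_F |t|) - 1) / C_F F(rho(x,y)), which bounds the Poisson
   bracket; the elementary inequality b (exp (a t) - 1) <= R sinh (R t) for a, 2 b <= R absorbs
   the constants into C_0 = R^2. *)

section \<open>A comparison principle for finite families\<close>

lemma has_real_derivative_norm:
  fixes u :: "real \<Rightarrow> 'a::real_inner"
  assumes "(u has_vector_derivative u') (at t)" and "u t \<noteq> 0"
  shows "((\<lambda>s. norm (u s)) has_real_derivative u' \<bullet> sgn (u t)) (at t)"
proof -
  have "((\<lambda>s. norm (u s)) has_derivative (\<lambda>h. (h *\<^sub>R u') \<bullet> sgn (u t))) (at t)"
    using has_derivative_compose[OF assms(1)[unfolded has_vector_derivative_def]
        has_derivative_norm[OF assms(2)]]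
    by (simp add: o_def)
  then show ?thesis
    by (simp add: has_field_derivative_def mult.commute[of _ "u' \<bullet> sgn (u t)"])
qed

lemma inner_sgn_le_norm: "(x::'a::real_inner) \<bullet> sgn y \<le> norm x"
proof -
  have "x \<bullet> sgn y \<le> norm x * norm (sgn y)"
    by (rule order_trans[OF _ norm_cauchy_schwarz]) simp
  also have "\<dots> \<le> norm x"
    by (cases "y = 0") (auto simp: norm_sgn)
  finally show ?thesis .
qed

lemma first_zero_of_positive_family:
  fixes g :: "'k \<Rightarrow> real \<Rightarrow> real"
  assumes K: "finite K" and cont: "\<And>k. k \<in> K \<Longrightarrow> continuous_on {0..T} (g k)"
    and pos0: "\<And>k. k \<in> K \<Longrightarrow> 0 < g k 0"
    and k0: "k0 \<in> K" and t0: "t0 \<in> {0..T}" and neg: "g k0 t0 \<le> 0"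
  obtains k ts where "k \<in> K" "ts \<in> {0<..T}" "g k ts = 0"
    "\<And>j. j \<in> K \<Longrightarrow> 0 \<le> g j ts"
    "\<And>j t. j \<in> K \<Longrightarrow> t \<in> {0..<ts} \<Longrightarrow> 0 < g j t"
proof -
  define S where "S = (\<Union>k\<in>K. {t \<in> {0..T}. g k t \<le> 0})"
  have "closed {t \<in> {0..T}. g k t \<le> 0}" if "k \<in> K" for k
    using continuous_on_closed_Collect_le[OF cont[OF that] continuous_on_const closed_atLeastAtMost]
    by simp
  then have "closed S"
    unfolding S_def using K by (intro closed_UN) blast+
  moreover have "t0 \<in> S"
    using k0 t0 neg by (auto simp: S_def)
  moreover have "bdd_below S"
    by (auto simp: S_def bdd_below_def)
  ultimately have "Inf S \<in> S"
    using closed_contains_Inf by blast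
  define ts where "ts = Inf S"
  from \<open>Inf S \<in> S\<close> obtain k where k: "k \<in> K" and ts: "ts \<in> {0..T}" and "g k ts \<le> 0"
    by (auto simp: S_def ts_def)
  have before: "0 < g j t" if j: "j \<in> K" and t: "t \<in> {0..<ts}" for j t
  proof (rule ccontr)
    assume "\<not> 0 < g j t"
    then have "t \<in> S"
      unfolding S_def using j t ts by (intro UN_I[of j]) auto
    then have "ts \<le> t"
      unfolding ts_def using \<open>bdd_below S\<close> by (rule cInf_lower)
    with t show False
      by simp
  qed
  have vanish: "g j ts = 0" if j: "j \<in> K" and "g j ts \<le> 0" for j
  proof -
    have "continuous_on {0..ts} (g j)"
      by (rule continuous_on_subset[OF cont[OF j]]) (use ts in auto)
    then obtain t where t: "0 \<le> t" "t \<le> ts" and "g j t = 0"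
      using IVT2'[of "g j" ts 0 0] pos0[OF j] \<open>g j ts \<le> 0\<close> ts by auto
    with before[OF j, of t] have "t = ts"
      by force
    with \<open>g j t = 0\<close> show ?thesis
      by simp
  qed
  have "ts \<noteq> 0"
    using pos0[OF k] \<open>g k ts \<le> 0\<close> by auto
  show thesis
  proof (rule that[OF k])
    show "ts \<in> {0<..T}"
      using ts \<open>ts \<noteq> 0\<close> by auto
    show "g k ts = 0"
      using vanish[OF k] \<open>g k ts \<le> 0\<close> .
    show "0 \<le> g j ts" if "j \<in> K" for j
      using vanish[OF that] by force
  qed (use before in blast)
qed

lemma positive_if_increasing_at_zeros:
  fixes g :: "'k \<Rightarrow> real \<Rightarrow> real"
  assumes K: "finite K" and cont: "\<And>k. k \<in> K \<Longrightarrow> continuous_on {0..T} (g k)"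
    and pos0: "\<And>k. k \<in> K \<Longrightarrow> 0 < g k 0"
    and increasing: "\<And>k t. k \<in> K \<Longrightarrow> t \<in> {0<..T} \<Longrightarrow> (\<And>j. j \<in> K \<Longrightarrow> 0 \<le> g j t) \<Longrightarrow>
        g k t = 0 \<Longrightarrow> \<exists>D>0. (g k has_real_derivative D) (at t)"
    and k: "k \<in> K" and t: "t \<in> {0..T}"
  shows "0 < g k t"
proof (rule ccontr)
  assume "\<not> 0 < g k t"
  then have "g k t \<le> 0"
    by simp
  then obtain k' ts where k': "k' \<in> K" and ts: "ts \<in> {0<..T}" and "g k' ts = 0"
    and nonneg: "\<And>j. j \<in> K \<Longrightarrow> 0 \<le> g j ts"
    and before: "\<And>j t. j \<in> K \<Longrightarrow> t \<in> {0..<ts} \<Longrightarrow> 0 < g j t"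
    using first_zero_of_positive_family[where g = g, OF K cont pos0 k t] by blast
  obtain D where "0 < D" and "(g k' has_real_derivative D) (at ts)"
    using increasing[OF k' ts nonneg \<open>g k' ts = 0\<close>] by blast
  then obtain d where "0 < d" and dec: "\<And>h. 0 < h \<Longrightarrow> h < d \<Longrightarrow> g k' (ts - h) < g k' ts"
    using DERIV_pos_inc_left by blast
  define h where "h = min (d / 2) ts"
  have "0 < h" "h < d" "h \<le> ts"
    using \<open>0 < d\<close> ts by (auto simp: h_def)
  then have "g k' (ts - h) < 0"
    using dec \<open>g k' ts = 0\<close> by force
  moreover have "0 < g k' (ts - h)"
    using before[OF k'] \<open>0 < h\<close> \<open>h \<le> ts\<close> by simp
  ultimately show False
    by simp
qed

lemma norm_less_barrier:
  fixes u u' :: "'k \<Rightarrow> real \<Rightarrow> 'a::real_inner" and W W' :: "'k \<Rightarrow> real \<Rightarrow> real"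
  assumes K: "finite K"
    and du: "\<And>k t. k \<in> K \<Longrightarrow> (u k has_vector_derivative u' k t) (at t)"
    and dW: "\<And>k t. k \<in> K \<Longrightarrow> (W k has_real_derivative W' k t) (at t)"
    and W_pos: "\<And>k t. k \<in> K \<Longrightarrow> t \<in> {0..T} \<Longrightarrow> 0 < W k t"
    and init: "\<And>k. k \<in> K \<Longrightarrow> norm (u k 0) < W k 0"
    and step: "\<And>k t. k \<in> K \<Longrightarrow> t \<in> {0..T} \<Longrightarrow> (\<forall>j\<in>K. norm (u j t) \<le> W j t) \<Longrightarrow>
        norm (u k t) = W k t \<Longrightarrow> norm (u' k t) < W' k t"
    and k: "k \<in> K" and t: "t \<in> {0..T}"
  shows "norm (u k t) < W k t"
proof -
  have "0 < W k t - norm (u k t)"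
  proof (rule positive_if_increasing_at_zeros[where g = "\<lambda>k t. W k t - norm (u k t)", OF K _ _ _ k t])
    fix k assume k: "k \<in> K"
    have "continuous_on {0..T} (u k)"
      using du[OF k] by (intro continuous_on_vector_derivative) (blast intro: has_vector_derivative_at_within)
    moreover have "continuous_on {0..T} (W k)"
      using dW[OF k] by (intro DERIV_continuous_on) (blast intro: has_field_derivative_at_within)
    ultimately show "continuous_on {0..T} (\<lambda>t. W k t - norm (u k t))"
      by (intro continuous_intros)
    show "0 < W k 0 - norm (u k 0)"
      using init[OF k] by simp
  next
    fix k t
    assume k: "k \<in> K" and t: "t \<in> {0<..T}" and all: "\<And>j. j \<in> K \<Longrightarrow> 0 \<le> W j t - norm (u j t)"
      and touch: "W k t - norm (u k t) = 0"
    have "t \<in> {0..T}"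
      using t by simp
    have "u k t \<noteq> 0"
      using W_pos[OF k \<open>t \<in> {0..T}\<close>] touch by auto
    have "\<forall>j\<in>K. norm (u j t) \<le> W j t"
      using all by fastforce
    then have "norm (u' k t) < W' k t"
      using step[OF k \<open>t \<in> {0..T}\<close>] touch by simp
    then have "0 < W' k t - u' k t \<bullet> sgn (u k t)"
      using inner_sgn_le_norm[of "u' k t" "u k t"] by simp
    moreover have "((\<lambda>t. W k t - norm (u k t)) has_real_derivative W' k t - u' k t \<bullet> sgn (u k t)) (at t)"
      by (intro DERIV_diff dW[OF k] has_real_derivative_norm du[OF k] \<open>u k t \<noteq> 0\<close>)
    ultimately show "\<exists>D>0. ((\<lambda>t. W k t - norm (u k t)) has_real_derivative D) (at t)"
      by blast
  qed
  then show ?thesis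
    by simp
qed

lemma norm_less_barrier_abs:
  fixes u u' :: "'k \<Rightarrow> real \<Rightarrow> 'a::real_inner" and W W' :: "'k \<Rightarrow> real \<Rightarrow> real"
  assumes K: "finite K"
    and du: "\<And>k t. k \<in> K \<Longrightarrow> (u k has_vector_derivative u' k t) (at t)"
    and dW: "\<And>k t. k \<in> K \<Longrightarrow> (W k has_real_derivative W' k t) (at t)"
    and W_pos: "\<And>k t. k \<in> K \<Longrightarrow> t \<in> {0..T} \<Longrightarrow> 0 < W k t"
    and init: "\<And>k. k \<in> K \<Longrightarrow> norm (u k 0) < W k 0"
    and step: "\<And>k t. k \<in> K \<Longrightarrow> \<bar>t\<bar> \<le> T \<Longrightarrow> (\<forall>j\<in>K. norm (u j t) \<le> W j \<bar>t\<bar>) \<Longrightarrow>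
        norm (u k t) = W k \<bar>t\<bar> \<Longrightarrow> norm (u' k t) < W' k \<bar>t\<bar>"
    and k: "k \<in> K" and t: "\<bar>t\<bar> \<le> T"
  shows "norm (u k t) < W k \<bar>t\<bar>"
proof -
  have reflected: "norm (u k (\<sigma> * s)) < W k s" if \<sigma>: "\<bar>\<sigma>\<bar> = 1" and s: "s \<in> {0..T}" for \<sigma> s
  proof (rule norm_less_barrier[where u = "\<lambda>k t. u k (\<sigma> * t)" and u' = "\<lambda>k t. \<sigma> *\<^sub>R u' k (\<sigma> * t)",
        OF K _ dW W_pos _ _ k s])
    fix k t assume k: "k \<in> K"
    show "((\<lambda>t. u k (\<sigma> * t)) has_vector_derivative \<sigma> *\<^sub>R u' k (\<sigma> * t)) (at t)"
      using vector_diff_chain_at[OF _ du[OF k], of "\<lambda>t. \<sigma> * t" \<sigma> t]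
      by (auto simp: o_def has_real_derivative_iff_has_vector_derivative[symmetric]
          intro!: derivative_eq_intros)
  next
    fix k t assume k: "k \<in> K" and t: "t \<in> {0..T}" and "\<forall>j\<in>K. norm (u j (\<sigma> * t)) \<le> W j t"
      and "norm (u k (\<sigma> * t)) = W k t"
    moreover have "\<bar>\<sigma> * t\<bar> = t"
      using \<sigma> t by (simp add: abs_mult)
    ultimately show "norm (\<sigma> *\<^sub>R u' k (\<sigma> * t)) < W' k t"
      using step[OF k, of "\<sigma> * t"] \<sigma> by simp
  next
    fix k assume "k \<in> K"
    then show "norm (u k (\<sigma> * 0)) < W k 0"
      using init by simp
  qed
  show ?thesis
  proof (cases "0 \<le> t")
    case True
    then show ?thesis
      using reflected[of 1 t] t by simp
  next
    case False
    then show ?thesis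
      using reflected[of "-1" "-t"] t by simp
  qed
qed

section \<open>Gronwall-type bounds\<close>

lemma le_of_forall_pos_less_add_mult:
  fixes x A B :: real
  assumes "0 \<le> B" and "\<And>e. 0 < e \<Longrightarrow> x < A + e * B"
  shows "x \<le> A"
proof (rule field_le_epsilon)
  fix e :: real
  assume "0 < e"
  then have "0 < e / (B + 1)"
    using \<open>0 \<le> B\<close> by simp
  then have "x < A + e / (B + 1) * B"
    by (rule assms(2))
  also have "e / (B + 1) * B \<le> e"
    using \<open>0 < e\<close> \<open>0 \<le> B\<close> by (simp add: field_simps)
  finally show "x \<le> A + e"
    by simp
qed

text \<open>Entrywise bound on the kernel \<open>exp (\<kappa> t w)\<close> of the linear system \<open>u' = \<kappa> w u\<close>, started
  at the site \<open>y\<close>: the convolution bound \<open>w\<^sup>n \<le> CF\<^sup>n\<^sup>-\<^sup>1 w\<close> sums the exponential series to it.\<close>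

definition lr_weight :: "real \<Rightarrow> real \<Rightarrow> ('k \<Rightarrow> 'k \<Rightarrow> real) \<Rightarrow> 'k \<Rightarrow> 'k \<Rightarrow> real \<Rightarrow> real" where
  "lr_weight \<kappa> CF w y k t = (if k = y then 1 else 0) + (exp (\<kappa> * CF * t) - 1) / CF * w k y"

lemma lr_weight_nonneg:
  assumes "0 \<le> \<kappa>" "0 < CF" "0 \<le> t" "0 \<le> w k y"
  shows "0 \<le> lr_weight \<kappa> CF w y k t"
  using assms by (simp add: lr_weight_def)

lemma lr_weight_le:
  assumes "0 \<le> \<kappa>" "0 < CF" "0 \<le> t" "t \<le> T" "0 \<le> w k y" "w k y \<le> S"
  shows "lr_weight \<kappa> CF w y k t \<le> 1 + (exp (\<kappa> * CF * T) - 1) / CF * S"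
proof -
  have "exp (\<kappa> * CF * t) - 1 \<le> exp (\<kappa> * CF * T) - 1"
    using assms by (simp add: mult_left_mono)
  then have "(exp (\<kappa> * CF * t) - 1) / CF * w k y \<le> (exp (\<kappa> * CF * T) - 1) / CF * S"
    using assms by (intro mult_mono divide_right_mono) auto
  moreover have "(if k = y then 1 else 0) \<le> (1::real)"
    by simp
  ultimately show ?thesis
    unfolding lr_weight_def by linarith
qed

lemma lr_weight_supersolution:
  fixes w :: "'k \<Rightarrow> 'k \<Rightarrow> real"
  assumes K: "finite K" and y: "y \<in> K" and k: "k \<in> K"
    and "0 \<le> \<kappa>" and CF: "0 < CF" and "0 \<le> t"
    and w_nonneg: "\<And>k l. k \<in> K \<Longrightarrow> l \<in> K \<Longrightarrow> 0 \<le> w k l"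
    and w_conv: "\<And>k l. k \<in> K \<Longrightarrow> l \<in> K \<Longrightarrow> (\<Sum>j\<in>K. w k j * w j l) \<le> CF * w k l"
  shows "(\<Sum>l\<in>K. w k l * lr_weight \<kappa> CF w y l t) \<le> exp (\<kappa> * CF * t) * w k y"
proof -
  define E where "E = exp (\<kappa> * CF * t)"
  have "1 \<le> E"
    using assms by (simp add: E_def)
  have "(\<Sum>l\<in>K. w k l * lr_weight \<kappa> CF w y l t)
      = (\<Sum>l\<in>K. w k l * (if l = y then 1 else 0)) + (E - 1) / CF * (\<Sum>l\<in>K. w k l * w l y)"
    unfolding lr_weight_def E_def by (simp add: distrib_left sum.distrib sum_distrib_left sum_divide_distrib ac_simps)
  also have "\<dots> = w k y + (E - 1) / CF * (\<Sum>l\<in>K. w k l * w l y)"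
    using K y by (simp add: mult_delta_right)
  also have "\<dots> \<le> w k y + (E - 1) / CF * (CF * w k y)"
    using w_conv[OF k y] \<open>1 \<le> E\<close> CF by (intro add_left_mono mult_left_mono) auto
  also have "\<dots> = E * w k y"
    using CF by (simp add: field_simps)
  finally show ?thesis
    by (simp add: E_def)
qed

lemma lieb_robinson_gronwall:
  fixes u u' :: "'k \<Rightarrow> real \<Rightarrow> 'a::real_inner" and w :: "'k \<Rightarrow> 'k \<Rightarrow> real"
  assumes K: "finite K" and y: "y \<in> K" and \<kappa>: "0 \<le> \<kappa>" and CF: "0 < CF" and S: "0 \<le> S"
    and \<sigma>: "0 \<le> \<sigma>"
    and w_nonneg: "\<And>k l. k \<in> K \<Longrightarrow> l \<in> K \<Longrightarrow> 0 \<le> w k l"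
    and w_conv: "\<And>k l. k \<in> K \<Longrightarrow> l \<in> K \<Longrightarrow> (\<Sum>j\<in>K. w k j * w j l) \<le> CF * w k l"
    and w_sum: "\<And>k. k \<in> K \<Longrightarrow> (\<Sum>j\<in>K. w k j) \<le> S"
    and du: "\<And>k t. k \<in> K \<Longrightarrow> (u k has_vector_derivative u' k t) (at t)"
    and bound: "\<And>k t. k \<in> K \<Longrightarrow> norm (u' k t) \<le> \<kappa> * (\<Sum>l\<in>K. w k l * norm (u l t))"
    and init: "\<And>k. k \<in> K \<Longrightarrow> norm (u k 0) \<le> \<sigma> * (if k = y then 1 else 0)"
    and k: "k \<in> K"
  shows "norm (u k t) \<le> \<sigma> * lr_weight \<kappa> CF w y k \<bar>t\<bar>"
proof (rule le_of_forall_pos_less_add_mult)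
  define \<mu> where "\<mu> = \<kappa> * S + 1"
  show "0 \<le> exp (\<mu> * \<bar>t\<bar>)"
    by simp
  fix e :: real
  assume e: "0 < e"
  define W where "W k t = \<sigma> * lr_weight \<kappa> CF w y k t + e * exp (\<mu> * t)" for k t
  define W' where "W' k t = \<sigma> * (\<kappa> * exp (\<kappa> * CF * t) * w k y) + e * (\<mu> * exp (\<mu> * t))" for k t
  have "norm (u k t) < W k \<bar>t\<bar>"
  proof (rule norm_less_barrier_abs[OF K du _ _ _ _ k order_refl])
    fix k t assume "k \<in> K"
    show "(W k has_real_derivative W' k t) (at t)"
      unfolding W_def W'_def lr_weight_def using CF
      by (auto intro!: derivative_eq_intros simp: field_simps)
  next
    fix k s assume k: "k \<in> K" and "s \<in> {0..\<bar>t\<bar>}"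
    then show "0 < W k s"
      using lr_weight_nonneg[of \<kappa> CF s w k y] w_nonneg[OF k y] \<kappa> CF \<sigma> e
      by (simp add: W_def add_nonneg_pos)
  next
    fix k assume "k \<in> K"
    then have "norm (u k 0) \<le> \<sigma> * lr_weight \<kappa> CF w y k 0"
      using init by (simp add: lr_weight_def)
    then show "norm (u k 0) < W k 0"
      using e by (simp add: W_def)
  next
    fix k s assume k: "k \<in> K" and all: "\<forall>j\<in>K. norm (u j s) \<le> W j \<bar>s\<bar>"
    define \<tau> where "\<tau> = \<bar>s\<bar>"
    have "(\<Sum>l\<in>K. w k l * norm (u l s)) \<le> (\<Sum>l\<in>K. w k l * W l \<tau>)"
      using all w_nonneg[OF k] by (intro sum_mono mult_left_mono) (auto simp: \<tau>_def)
    then have "norm (u' k s) \<le> \<kappa> * (\<Sum>l\<in>K. w k l * W l \<tau>)"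
      using bound[OF k, of s] \<kappa> by (meson mult_left_mono order_trans)
    also have "\<dots> = \<kappa> * (\<sigma> * (\<Sum>l\<in>K. w k l * lr_weight \<kappa> CF w y l \<tau>) + e * exp (\<mu> * \<tau>) * (\<Sum>l\<in>K. w k l))"
      by (simp add: W_def algebra_simps sum.distrib sum_distrib_left sum_distrib_right)
    also have "\<dots> \<le> \<kappa> * (\<sigma> * (exp (\<kappa> * CF * \<tau>) * w k y) + e * exp (\<mu> * \<tau>) * S)"
      using lr_weight_supersolution[OF K y k \<kappa> CF _ w_nonneg w_conv, of \<tau>] w_sum[OF k] \<sigma> e \<kappa>
      by (intro mult_left_mono add_mono) (auto simp: \<tau>_def)
    also have "\<dots> < W' k \<tau>"
      using e by (simp add: W'_def \<mu>_def algebra_simps)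
    finally show "norm (u' k s) < W' k \<bar>s\<bar>"
      by (simp add: \<tau>_def)
  qed
  then show "norm (u k t) < \<sigma> * lr_weight \<kappa> CF w y k \<bar>t\<bar> + e * exp (\<mu> * \<bar>t\<bar>)"
    by (simp add: W_def)
qed

lemma linear_gronwall_abs:
  fixes u u' :: "'k \<Rightarrow> real \<Rightarrow> 'a::real_inner" and w :: "'k \<Rightarrow> 'k \<Rightarrow> real"
  assumes K: "finite K" and \<kappa>: "0 \<le> \<kappa>" and S: "0 \<le> S" and \<eta>: "0 \<le> \<eta>"
    and w_nonneg: "\<And>k l. k \<in> K \<Longrightarrow> l \<in> K \<Longrightarrow> 0 \<le> w k l"
    and w_sum: "\<And>k. k \<in> K \<Longrightarrow> (\<Sum>j\<in>K. w k j) \<le> S"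
    and du: "\<And>k t. k \<in> K \<Longrightarrow> (u k has_vector_derivative u' k t) (at t)"
    and bound: "\<And>k t. k \<in> K \<Longrightarrow> \<bar>t\<bar> \<le> T \<Longrightarrow> norm (u' k t) \<le> \<kappa> * (\<Sum>l\<in>K. w k l * norm (u l t)) + \<eta>"
    and init: "\<And>k. k \<in> K \<Longrightarrow> u k 0 = 0"
    and k: "k \<in> K" and t: "\<bar>t\<bar> \<le> T"
  shows "norm (u k t) \<le> \<eta> * exp ((\<kappa> * S + 1) * \<bar>t\<bar>)"
proof (rule le_of_forall_pos_less_add_mult)
  define \<mu> where "\<mu> = \<kappa> * S + 1"
  show "0 \<le> exp (\<mu> * \<bar>t\<bar>)"
    by simp
  fix e :: real
  assume e: "0 < e"
  define W where "W k t = (\<eta> + e) * exp (\<mu> * t)" for k :: 'k and t :: real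
  define W' where "W' k t = (\<eta> + e) * (\<mu> * exp (\<mu> * t))" for k :: 'k and t :: real
  have "norm (u k t) < W k \<bar>t\<bar>"
  proof (rule norm_less_barrier_abs[OF K du _ _ _ _ k t])
    fix k t
    show "(W k has_real_derivative W' k t) (at t)"
      unfolding W_def W'_def by (auto intro!: derivative_eq_intros)
    show "0 < W k t"
      using e \<eta> by (simp add: W_def)
  next
    fix k assume "k \<in> K"
    then show "norm (u k 0) < W k 0"
      using init e \<eta> by (simp add: W_def)
  next
    fix k s assume k: "k \<in> K" and s: "\<bar>s\<bar> \<le> T" and all: "\<forall>j\<in>K. norm (u j s) \<le> W j \<bar>s\<bar>"
    define X where "X = exp (\<mu> * \<bar>s\<bar>)"
    have "1 \<le> X"
      using \<kappa> S by (simp add: X_def \<mu>_def)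
    have "(\<Sum>l\<in>K. w k l * norm (u l s)) \<le> (\<Sum>l\<in>K. w k l * ((\<eta> + e) * X))"
      using all w_nonneg[OF k] by (intro sum_mono mult_left_mono) (auto simp: W_def X_def)
    then have "norm (u' k s) \<le> \<kappa> * (\<Sum>l\<in>K. w k l * ((\<eta> + e) * X)) + \<eta>"
      using bound[OF k s] \<kappa> by (meson add_right_mono mult_left_mono order_trans)
    also have "\<dots> = \<kappa> * ((\<Sum>l\<in>K. w k l) * ((\<eta> + e) * X)) + \<eta>"
      by (simp add: sum_distrib_right)
    also have "\<dots> \<le> \<kappa> * (S * ((\<eta> + e) * X)) + \<eta>"
      using w_sum[OF k] e \<eta> \<open>1 \<le> X\<close> \<kappa> by (intro add_right_mono mult_left_mono mult_right_mono) auto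
    also have "\<dots> < \<kappa> * (S * ((\<eta> + e) * X)) + (\<eta> + e) * X"
      using \<open>1 \<le> X\<close> e \<eta> by (smt (verit) mult_le_cancel_left1)
    also have "\<dots> = W' k \<bar>s\<bar>"
      by (simp add: W'_def X_def \<mu>_def algebra_simps)
    finally show "norm (u' k s) < W' k \<bar>s\<bar>" .
  qed
  then show "norm (u k t) < \<eta> * exp ((\<kappa> * S + 1) * \<bar>t\<bar>) + e * exp (\<mu> * \<bar>t\<bar>)"
    by (simp add: W_def \<mu>_def algebra_simps)
qed

section \<open>Mean value estimates\<close>

lemma mvt_abs_le:
  fixes f :: "real \<Rightarrow> real"
  assumes "\<And>s. (f has_real_derivative f' s) (at s)"
  shows "\<exists>s. \<bar>s\<bar> \<le> \<bar>h\<bar> \<and> f h - f 0 = f' s * h"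
proof -
  consider "h = 0" | "0 < h" | "h < 0"
    by linarith
  then show ?thesis
  proof cases
    case 1
    then show ?thesis
      by (intro exI[of _ 0]) simp
  next
    case 2
    from MVT2[OF 2, of f f'] assms obtain s where "0 < s" "s < h" "f h - f 0 = (h - 0) * f' s"
      by blast
    then show ?thesis
      by (intro exI[of _ s]) simp
  next
    case 3
    from MVT2[OF 3, of f f'] assms obtain s where "h < s" "s < 0" "f 0 - f h = (0 - h) * f' s"
      by blast
    then show ?thesis
      by (intro exI[of _ s]) (simp add: algebra_simps)
  qed
qed

text \<open>Moving from \<open>P {}\<close> to \<open>P C\<close> one coordinate \<open>c \<in> C\<close> at a time along the line \<open>line c\<close>, each
  step contributes one mean value term, evaluated at a point \<open>\<xi> c\<close> of the segment of that step.\<close>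

lemma telescoping_mvt:
  fixes h :: "'p \<Rightarrow> real" and P :: "'c set \<Rightarrow> 'p" and line :: "'c \<Rightarrow> 'p \<Rightarrow> real \<Rightarrow> 'p"
  assumes C: "finite C"
    and step: "\<And>c A. c \<in> C \<Longrightarrow> c \<notin> A \<Longrightarrow> A \<subseteq> C \<Longrightarrow> P (insert c A) = line c (P A) (\<delta> c)"
    and line_0: "\<And>c Z. line c Z 0 = Z"
    and deriv: "\<And>c A s. c \<in> C \<Longrightarrow> A \<subseteq> C \<Longrightarrow>
        ((\<lambda>s. h (line c (P A) s)) has_real_derivative D c (line c (P A) s)) (at s)"
  shows "\<exists>\<xi>. h (P C) - h (P {}) = (\<Sum>c\<in>C. D c (\<xi> c) * \<delta> c) \<and>
      (\<forall>c\<in>C. \<exists>A s. A \<subseteq> C \<and> c \<notin> A \<and> \<bar>s\<bar> \<le> \<bar>\<delta> c\<bar> \<and> \<xi> c = line c (P A) s)"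
proof -
  have "\<exists>\<xi>. h (P B) - h (P {}) = (\<Sum>c\<in>B. D c (\<xi> c) * \<delta> c) \<and>
      (\<forall>c\<in>B. \<exists>A s. A \<subseteq> C \<and> c \<notin> A \<and> \<bar>s\<bar> \<le> \<bar>\<delta> c\<bar> \<and> \<xi> c = line c (P A) s)"
    if "B \<subseteq> C" for B
    using that
  proof (induction B rule: infinite_finite_induct)
    case (infinite B)
    then show ?case
      using C finite_subset by blast
  next
    case empty
    then show ?case
      by simp
  next
    case (insert c B)
    then have c: "c \<in> C" and B: "B \<subseteq> C"
      by auto
    from insert obtain \<xi> where sum: "h (P B) - h (P {}) = (\<Sum>c\<in>B. D c (\<xi> c) * \<delta> c)"
      and \<xi>: "\<forall>c\<in>B. \<exists>A s. A \<subseteq> C \<and> c \<notin> A \<and> \<bar>s\<bar> \<le> \<bar>\<delta> c\<bar> \<and> \<xi> c = line c (P A) s"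
      by blast
    obtain s where s: "\<bar>s\<bar> \<le> \<bar>\<delta> c\<bar>"
      and mv: "h (line c (P B) (\<delta> c)) - h (line c (P B) 0) = D c (line c (P B) s) * \<delta> c"
      using mvt_abs_le[OF deriv[OF c B]] by blast
    define \<xi>' where "\<xi>' = \<xi>(c := line c (P B) s)"
    have "h (P (insert c B)) - h (P {}) = D c (line c (P B) s) * \<delta> c + (\<Sum>c\<in>B. D c (\<xi> c) * \<delta> c)"
      using mv sum step[OF c insert(2) B] line_0 by simp
    also have "\<dots> = (\<Sum>c\<in>insert c B. D c (\<xi>' c) * \<delta> c)"
      using insert(1,2) by (auto simp: \<xi>'_def intro!: sum.cong)
    finally show ?case
      using \<xi> s B insert(2) by (intro exI[of _ \<xi>']) (auto simp: \<xi>'_def)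
  qed
  then show ?thesis
    by blast
qed

lemma has_real_derivative_line_shift:
  fixes v :: "'a::real_vector"
  assumes "\<And>x. ((\<lambda>s. f (x + s *\<^sub>R v)) has_real_derivative D x) (at 0)"
  shows "((\<lambda>s. f (x + s *\<^sub>R v)) has_real_derivative D (x + s0 *\<^sub>R v)) (at s0)"
proof -
  have "((\<lambda>s. f ((x + s0 *\<^sub>R v) + (s - s0) *\<^sub>R v)) has_real_derivative D (x + s0 *\<^sub>R v)) (at s0)"
    using DERIV_shift[of "\<lambda>s. f ((x + s0 *\<^sub>R v) + s *\<^sub>R v)" "D (x + s0 *\<^sub>R v)" s0 "-s0"] assms
    by simp
  moreover have "(x + s0 *\<^sub>R v) + (s - s0) *\<^sub>R v = x + s *\<^sub>R v" for s
    by (simp add: scaleR_diff_left algebra_simps)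
  ultimately show ?thesis
    by simp
qed

lemma telescoping_mvt_cart:
  fixes \<phi> :: "real^'d::finite \<Rightarrow> real"
  assumes D: "\<And>c x s. ((\<lambda>s. \<phi> (x + s *\<^sub>R axis c 1)) has_real_derivative D c (x + s *\<^sub>R axis c 1)) (at s)"
  shows "\<exists>\<xi>. (\<forall>j. norm (\<xi> j - a) \<le> norm h) \<and> \<phi> (a + h) - \<phi> a = (\<Sum>j\<in>UNIV. D j (\<xi> j) * h $ j)"
proof -
  define P where "P A = a + (\<Sum>j\<in>A. h $ j *\<^sub>R axis j 1)" for A
  have "\<exists>\<xi>. \<phi> (P UNIV) - \<phi> (P {}) = (\<Sum>c\<in>UNIV. D c (\<xi> c) * h $ c) \<and>
      (\<forall>c\<in>UNIV. \<exists>A s. A \<subseteq> UNIV \<and> c \<notin> A \<and> \<bar>s\<bar> \<le> \<bar>h $ c\<bar> \<and> \<xi> c = P A + s *\<^sub>R axis c 1)"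
  proof (rule telescoping_mvt[where line = "\<lambda>c Z s. Z + s *\<^sub>R axis c 1"])
    show "P (insert c A) = P A + h $ c *\<^sub>R axis c 1" if "c \<notin> A" for c A
      using that by (simp add: P_def algebra_simps)
  qed (use D in simp_all)
  then obtain \<xi> where eq: "\<phi> (P UNIV) - \<phi> (P {}) = (\<Sum>j\<in>UNIV. D j (\<xi> j) * h $ j)"
    and \<xi>: "\<forall>c. \<exists>A s. c \<notin> A \<and> \<bar>s\<bar> \<le> \<bar>h $ c\<bar> \<and> \<xi> c = P A + s *\<^sub>R axis c 1"
    by auto
  have "norm (\<xi> c - a) \<le> norm h" for c
  proof -
    obtain A s where "c \<notin> A" "\<bar>s\<bar> \<le> \<bar>h $ c\<bar>" and "\<xi> c = P A + s *\<^sub>R axis c 1"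
      using \<xi> by blast
    then have "(\<xi> c - a) $ j = (if j \<in> A then h $ j else 0) + (if j = c then s else 0)" for j
      by (simp add: P_def sum_component axis_def if_distrib cong: if_cong)
    then show ?thesis
      using \<open>c \<notin> A\<close> \<open>\<bar>s\<bar> \<le> \<bar>h $ c\<bar>\<close> by (intro norm_le_componentwise_cart) auto
  qed
  moreover have "P UNIV = a + h"
    by (simp add: P_def vec_eq_iff sum_component axis_def if_distrib[of "\<lambda>x. _ * x"] cong: if_cong)
  ultimately show ?thesis
    using eq by (auto simp: P_def)
qed

lemma norm_le_card_sq_mult:
  fixes w h :: "real^'d::finite"
  assumes w: "\<And>i. w $ i = (\<Sum>j\<in>UNIV. A i j * h $ j)" and A: "\<And>i j. \<bar>A i j\<bar> \<le> B"
  shows "norm w \<le> real CARD('d)^2 * B * norm h"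
proof -
  have "0 \<le> B"
    by (rule order_trans[OF abs_ge_zero A])
  have "\<bar>w $ i\<bar> \<le> real CARD('d) * B * norm h" for i
  proof -
    have "\<bar>w $ i\<bar> \<le> (\<Sum>j\<in>UNIV. \<bar>A i j * h $ j\<bar>)"
      unfolding w by (rule sum_abs)
    also have "\<dots> \<le> (\<Sum>j\<in>(UNIV::'d set). B * norm h)"
    proof (rule sum_mono)
      fix j
      show "\<bar>A i j * h $ j\<bar> \<le> B * norm h"
        unfolding abs_mult by (rule mult_mono[OF A component_le_norm_cart \<open>0 \<le> B\<close> abs_ge_zero])
    qed
    finally show ?thesis
      by simp
  qed
  then have "norm w \<le> (\<Sum>i\<in>(UNIV::'d set). real CARD('d) * B * norm h)"
    by (intro order_trans[OF norm_le_l1_cart sum_mono])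
  then show ?thesis
    by (simp add: power2_eq_square)
qed

section \<open>Gradient and Hessian of the interaction potentials\<close>

declare partial_iter.simps(2)[simp del]

definition gradient :: "(real^'d::finite \<Rightarrow> real) \<Rightarrow> real^'d \<Rightarrow> real^'d" where
  "gradient f a = (\<chi> i. partial_iter [i] f a)"

definition hessian :: "(real^'d::finite \<Rightarrow> real) \<Rightarrow> real^'d \<Rightarrow> real^'d^'d" where
  "hessian f a = (\<chi> i j. partial_iter [j, i] f a)"

lemma hessian_mult_component: "(hessian f a *v h) $ i = (\<Sum>j\<in>UNIV. partial_iter [j, i] f a * h $ j)"
  by (simp add: hessian_def matrix_vector_mult_def)

lemma smooth_line_deriv:
  fixes f :: "real^'d::finite \<Rightarrow> real"
  assumes "smooth_fun f"
  shows "((\<lambda>s. partial_iter \<beta> f (x + s *\<^sub>R axis i 1)) has_real_derivative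
      partial_iter (i # \<beta>) f (x + s0 *\<^sub>R axis i 1)) (at s0)"
proof (rule has_real_derivative_line_shift)
  fix x
  obtain D where D: "((\<lambda>s. partial_iter \<beta> f (x + s *\<^sub>R axis i 1)) has_real_derivative D) (at 0)"
    using assms unfolding smooth_fun_def real_differentiable_def by blast
  then have "partial_iter (i # \<beta>) f x = D"
    by (simp add: DERIV_imp_deriv partial_iter.simps(2))
  with D show "((\<lambda>s. partial_iter \<beta> f (x + s *\<^sub>R axis i 1)) has_real_derivative partial_iter (i # \<beta>) f x) (at 0)"
    by simp
qed

lemma partial_diff_eq_sum:
  fixes f :: "real^'d::finite \<Rightarrow> real"
  assumes "smooth_fun f"
  shows "\<exists>\<xi>. (\<forall>j. norm (\<xi> j - a) \<le> norm h) \<and>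
     partial_iter [i] f (a + h) - partial_iter [i] f a = (\<Sum>j\<in>UNIV. partial_iter [j, i] f (\<xi> j) * h $ j)"
  by (rule telescoping_mvt_cart) (rule smooth_line_deriv[OF assms])

lemma gradient_lipschitz:
  fixes f :: "real^'d::finite \<Rightarrow> real"
  assumes "smooth_fun f" and bound: "\<And>\<beta> x. \<bar>partial_iter \<beta> f x\<bar> \<le> Cf * CV ^ length \<beta>"
  shows "norm (gradient f (a + h) - gradient f a) \<le> real CARD('d)^2 * (Cf * CV^2) * norm h"
proof -
  have "\<forall>i. \<exists>\<xi>. partial_iter [i] f (a + h) - partial_iter [i] f a
      = (\<Sum>j\<in>UNIV. partial_iter [j, i] f (\<xi> j) * h $ j)"
    using partial_diff_eq_sum[OF assms(1), of a h] by blast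
  from choice[OF this] obtain \<Xi> where eq: "\<And>i. partial_iter [i] f (a + h) - partial_iter [i] f a
      = (\<Sum>j\<in>UNIV. partial_iter [j, i] f (\<Xi> i j) * h $ j)"
    by blast
  show ?thesis
  proof (rule norm_le_card_sq_mult[where A = "\<lambda>i j. partial_iter [j, i] f (\<Xi> i j)"])
    show "(gradient f (a + h) - gradient f a) $ i = (\<Sum>j\<in>UNIV. partial_iter [j, i] f (\<Xi> i j) * h $ j)" for i
      by (simp add: gradient_def eq)
    show "\<bar>partial_iter [j, i] f (\<Xi> i j)\<bar> \<le> Cf * CV\<^sup>2" for i j
      using bound[of "[j, i]"] by (simp add: power2_eq_square)
  qed
qed

lemma norm_hessian_mult_le:
  fixes f :: "real^'d::finite \<Rightarrow> real"
  assumes bound: "\<And>\<beta> x. \<bar>partial_iter \<beta> f x\<bar> \<le> Cf * CV ^ length \<beta>"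
  shows "norm (hessian f a *v h) \<le> real CARD('d)^2 * (Cf * CV^2) * norm h"
proof (rule norm_le_card_sq_mult[OF hessian_mult_component])
  show "\<bar>partial_iter [j, i] f a\<bar> \<le> Cf * CV\<^sup>2" for i j
    using bound[of "[j, i]"] by (simp add: power2_eq_square)
qed

lemma gradient_linearization_uniform:
  fixes f :: "real^'d::finite \<Rightarrow> real"
  assumes "smooth_fun f" and "compact K" and "0 < e"
  shows "\<exists>\<delta>>0. \<forall>a\<in>K. \<forall>h. norm h < \<delta> \<longrightarrow>
      norm (gradient f (a + h) - gradient f a - hessian f a *v h) \<le> e * norm h"
proof -
  define e' where "e' = e / real CARD('d)^2"
  have "0 < e'"
    using \<open>0 < e\<close> by (simp add: e'_def)
  obtain R where R: "\<forall>x\<in>K. norm x \<le> R"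
    using compact_imp_bounded[OF \<open>compact K\<close>] by (auto simp: bounded_iff)
  define S where "S = cball (0::real^'d) (R + 1)"
  have "continuous_on UNIV (hessian f)"
    using \<open>smooth_fun f\<close> unfolding hessian_def smooth_fun_def by (intro continuous_on_vec_lambda) auto
  then have "continuous_on S (hessian f)"
    by (rule continuous_on_subset) simp
  then obtain \<delta> where "0 < \<delta>"
    and uc: "\<And>x x'. x \<in> S \<Longrightarrow> x' \<in> S \<Longrightarrow> dist x' x < \<delta> \<Longrightarrow> dist (hessian f x') (hessian f x) < e'"
    using compact_uniformly_continuous[of S "hessian f"] \<open>0 < e'\<close>
    unfolding uniformly_continuous_on_def S_def by (metis compact_cball)
  have "norm (gradient f (a + h) - gradient f a - hessian f a *v h) \<le> e * norm h"
    if a: "a \<in> K" and h: "norm h < min \<delta> 1" for a h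
  proof -
    have "\<forall>i. \<exists>\<xi>. (\<forall>j. norm (\<xi> j - a) \<le> norm h) \<and> partial_iter [i] f (a + h) - partial_iter [i] f a
        = (\<Sum>j\<in>UNIV. partial_iter [j, i] f (\<xi> j) * h $ j)"
      using partial_diff_eq_sum[OF \<open>smooth_fun f\<close>, of a h] by blast
    from choice[OF this] obtain \<Xi> where \<Xi>: "\<And>i j. norm (\<Xi> i j - a) \<le> norm h"
      and eq: "\<And>i. partial_iter [i] f (a + h) - partial_iter [i] f a
        = (\<Sum>j\<in>UNIV. partial_iter [j, i] f (\<Xi> i j) * h $ j)"
      by blast
    have close: "\<bar>partial_iter [j, i] f (\<Xi> i j) - partial_iter [j, i] f a\<bar> \<le> e'" for i j
    proof -
      have "a \<in> S" "\<Xi> i j \<in> S"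
        using R a h \<Xi>[of i j] norm_triangle_sub[of "\<Xi> i j" a] by (auto simp: S_def)
      moreover have "dist (\<Xi> i j) a < \<delta>"
        using \<Xi>[of i j] h by (simp add: dist_norm)
      ultimately have "norm (hessian f (\<Xi> i j) - hessian f a) < e'"
        using uc by (simp add: dist_norm)
      moreover have "\<bar>(hessian f (\<Xi> i j) - hessian f a) $ i $ j\<bar> \<le> norm (hessian f (\<Xi> i j) - hessian f a)"
        by (rule order_trans[OF component_le_norm_cart Finite_Cartesian_Product.norm_nth_le])
      ultimately show ?thesis
        by (simp add: hessian_def)
    qed
    have "norm (gradient f (a + h) - gradient f a - hessian f a *v h) \<le> real CARD('d)^2 * e' * norm h"
    proof (rule norm_le_card_sq_mult[where A = "\<lambda>i j. partial_iter [j, i] f (\<Xi> i j) - partial_iter [j, i] f a"])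
      show "(gradient f (a + h) - gradient f a - hessian f a *v h) $ i
          = (\<Sum>j\<in>UNIV. (partial_iter [j, i] f (\<Xi> i j) - partial_iter [j, i] f a) * h $ j)" for i
        by (simp add: gradient_def hessian_mult_component eq sum_subtractf left_diff_distrib)
    qed (rule close)
    then show ?thesis
      by (simp add: e'_def)
  qed
  then show ?thesis
    using \<open>0 < \<delta>\<close> by (intro exI[of _ "min \<delta> 1"]) auto
qed

section \<open>Partial derivatives of the Hamiltonian\<close>

lemma has_real_derivative_norm_sq_axis:
  "((\<lambda>s. (norm (x + s *\<^sub>R axis i (1::real)))\<^sup>2) has_real_derivative 2 * x $ i) (at 0)"
proof -
  have "(norm (x + s *\<^sub>R axis i 1))\<^sup>2 = x \<bullet> x + 2 * s * x $ i + s\<^sup>2" for s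
  proof -
    have "(norm (x + s *\<^sub>R axis i 1))\<^sup>2 = (x + s *\<^sub>R axis i 1) \<bullet> (x + s *\<^sub>R axis i 1)"
      by (simp add: power2_norm_eq_inner)
    also have "\<dots> = x \<bullet> x + 2 * s * x $ i + s\<^sup>2"
      by (simp add: inner_add_left inner_add_right inner_commute[of "axis i 1" x] inner_axis
          inner_axis_axis power2_eq_square algebra_simps)
    finally show ?thesis .
  qed
  then show ?thesis
    by (auto intro!: derivative_eq_intros)
qed

lemma dp_hamiltonian:
  assumes "finite L" and "j \<in> L"
  shows "dp (hamiltonian L m \<nu> V) j i z = fst z j $ i / m j"
proof -
  let ?p = "\<lambda>s. (fst z)(j := fst z j + s *\<^sub>R axis i 1)"
  have "((\<lambda>s. hamiltonian L m \<nu> V (?p s, snd z)) has_real_derivative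
      (\<Sum>k\<in>L. if k = j then 2 * fst z j $ i / (2 * m j) else 0) + 0) (at 0)"
    unfolding hamiltonian_def fst_conv snd_conv
  proof (intro DERIV_add DERIV_sum DERIV_const)
    fix k
    show "((\<lambda>s. (norm (?p s k))\<^sup>2 / (2 * m k) + \<nu> k * (norm (snd z k))\<^sup>2 / 2) has_real_derivative
        (if k = j then 2 * fst z j $ i / (2 * m j) else 0)) (at 0)"
    proof (cases "k = j")
      case True
      have "((\<lambda>s. (norm (fst z j + s *\<^sub>R axis i 1))\<^sup>2 / (2 * m j) + \<nu> k * (norm (snd z k))\<^sup>2 / 2)
          has_real_derivative 2 * fst z j $ i / (2 * m j) + 0) (at 0)"
        by (intro DERIV_add DERIV_cdivide has_real_derivative_norm_sq_axis DERIV_const)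
      then show ?thesis
        using True by simp
    qed (simp add: DERIV_const)
  qed
  then show ?thesis
    using assms unfolding dp_def by (simp add: DERIV_imp_deriv)
qed

lemma smooth_scaled_line_deriv:
  fixes f :: "real^'d::finite \<Rightarrow> real"
  assumes "smooth_fun f"
  shows "((\<lambda>s. f (a + (c * s) *\<^sub>R axis i 1)) has_real_derivative c * partial_iter [i] f a) (at 0)"
proof -
  have "((\<lambda>s. f (a + s *\<^sub>R axis i 1)) has_real_derivative partial_iter [i] f a) (at (c * 0))"
    using smooth_line_deriv[OF assms, of "[]" a i 0] by simp
  from DERIV_chain2[OF this DERIV_cmult_Id[of c]] show ?thesis
    by (simp add: mult.commute)
qed

lemma partial_reflect:
  fixes f g :: "real^'d::finite \<Rightarrow> real"
  assumes "smooth_fun g" and "\<And>x. f x = g (- x)"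
  shows "partial_iter [i] f a = - partial_iter [i] g (- a)"
proof -
  have "((\<lambda>s. g (- a + ((-1) * s) *\<^sub>R axis i 1)) has_real_derivative (-1) * partial_iter [i] g (- a)) (at 0)"
    by (rule smooth_scaled_line_deriv[OF assms(1)])
  moreover have "(\<lambda>s. g (- a + ((-1) * s) *\<^sub>R axis i 1)) = (\<lambda>s. f (a + s *\<^sub>R axis i 1))"
    by (rule ext) (simp add: assms(2) algebra_simps)
  ultimately show ?thesis
    by (simp add: partial_iter.simps(2) DERIV_imp_deriv)
qed

lemma dq_hamiltonian:
  assumes L: "finite L" and j: "j \<in> L"
    and smooth: "\<And>k l. k \<in> L \<Longrightarrow> l \<in> L \<Longrightarrow> smooth_fun (V k l)"
    and sym: "\<And>k l x. k \<in> L \<Longrightarrow> l \<in> L \<Longrightarrow> V k l x = V l k (- x)"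
  shows "dq (hamiltonian L m \<nu> V) j i z = \<nu> j * snd z j $ i + (\<Sum>l\<in>L. partial_iter [i] (V j l) (snd z j - snd z l))"
proof -
  let ?e = "axis i (1::real)"
  let ?q = "\<lambda>s. (snd z)(j := snd z j + s *\<^sub>R ?e)"
  define c where "c k l = (if k = j then 1 else 0) - (if l = j then 1 else (0::real))" for k l
  define T where "T k l = partial_iter [i] (V k l) (snd z k - snd z l)" for k l
  have kinetic: "((\<lambda>s. \<Sum>k\<in>L. (norm (fst z k))\<^sup>2 / (2 * m k) + \<nu> k * (norm (?q s k))\<^sup>2 / 2)
      has_real_derivative (\<Sum>k\<in>L. if k = j then \<nu> j * (2 * snd z j $ i) / 2 else 0)) (at 0)"
  proof (intro DERIV_sum)
    fix k
    show "((\<lambda>s. (norm (fst z k))\<^sup>2 / (2 * m k) + \<nu> k * (norm (?q s k))\<^sup>2 / 2) has_real_derivative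
        (if k = j then \<nu> j * (2 * snd z j $ i) / 2 else 0)) (at 0)"
    proof (cases "k = j")
      case True
      have "((\<lambda>s. (norm (fst z k))\<^sup>2 / (2 * m k) + \<nu> j * (norm (snd z j + s *\<^sub>R ?e))\<^sup>2 / 2)
          has_real_derivative 0 + \<nu> j * (2 * snd z j $ i) / 2) (at 0)"
        by (intro DERIV_add DERIV_cdivide DERIV_cmult has_real_derivative_norm_sq_axis DERIV_const)
      then show ?thesis
        using True by simp
    qed (simp add: DERIV_const)
  qed
  have "?q s k - ?q s l = (snd z k - snd z l) + (c k l * s) *\<^sub>R ?e" for s k l
    by (simp add: c_def algebra_simps)
  moreover have "((\<lambda>s. V k l ((snd z k - snd z l) + (c k l * s) *\<^sub>R ?e)) has_real_derivative c k l * T k l) (at 0)"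
    if "k \<in> L" "l \<in> L" for k l
    unfolding T_def by (rule smooth_scaled_line_deriv[OF smooth[OF that]])
  ultimately have potential: "((\<lambda>s. 1/2 * (\<Sum>k\<in>L. \<Sum>l\<in>L. V k l (?q s k - ?q s l))) has_real_derivative
      1/2 * (\<Sum>k\<in>L. \<Sum>l\<in>L. c k l * T k l)) (at 0)"
    by (intro DERIV_cmult DERIV_sum) simp
  have antisym: "T k j = - T j k" if "k \<in> L" for k
    using partial_reflect[OF smooth[OF j that] sym[OF that j]] by (simp add: T_def)
  have "(\<Sum>k\<in>L. \<Sum>l\<in>L. c k l * T k l)
      = (\<Sum>k\<in>L. \<Sum>l\<in>L. if k = j then T k l else 0) - (\<Sum>k\<in>L. \<Sum>l\<in>L. if l = j then T k l else 0)"
    by (simp add: c_def left_diff_distrib sum_subtractf if_distrib[of "\<lambda>x. x * _"] cong: if_cong)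
  also have "\<dots> = (\<Sum>l\<in>L. T j l) - (\<Sum>k\<in>L. T k j)"
    using L j by (simp add: sum.delta' sum.swap[of "\<lambda>k l. if k = j then T k l else 0"])
  also have "(\<Sum>k\<in>L. T k j) = - (\<Sum>k\<in>L. T j k)"
    using antisym by (simp add: sum_negf[symmetric])
  finally have "((\<lambda>s. hamiltonian L m \<nu> V (fst z, ?q s)) has_real_derivative
      \<nu> j * snd z j $ i + (\<Sum>l\<in>L. T j l)) (at 0)"
    using DERIV_add[OF kinetic potential] L j unfolding hamiltonian_def by simp
  then show ?thesis
    unfolding dq_def T_def by (simp add: DERIV_imp_deriv)
qed

section \<open>Finite lattice systems\<close>

definition site :: "'d::finite phase \<Rightarrow> nat \<Rightarrow> (real^'d) \<times> (real^'d)" where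
  "site z k = (fst z k, snd z k)"

lemma site_diff: "site z' l - site z l = (fst z' l - fst z l, snd z' l - snd z l)"
  by (simp add: site_def)

definition ham_field :: "nat set \<Rightarrow> (nat \<Rightarrow> real) \<Rightarrow> (nat \<Rightarrow> real) \<Rightarrow> (nat \<Rightarrow> nat \<Rightarrow> real^'d \<Rightarrow> real)
    \<Rightarrow> 'd::finite phase \<Rightarrow> nat \<Rightarrow> (real^'d) \<times> (real^'d)" where
  "ham_field L m \<nu> V z k =
    (- (\<nu> k *\<^sub>R snd z k + (\<Sum>l\<in>L. gradient (V k l) (snd z k - snd z l))), (1 / m k) *\<^sub>R fst z k)"

lemma norm_site_field_le:
  fixes p q :: "nat \<Rightarrow> real^'d::finite" and \<Psi> :: "nat \<Rightarrow> real^'d \<Rightarrow> real^'d"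
  assumes L: "finite L"
    and \<Psi>: "\<And>l h. l \<in> L \<Longrightarrow> norm (\<Psi> l h) \<le> K l * norm h"
    and K: "\<And>l. l \<in> L \<Longrightarrow> 0 \<le> K l"
  shows "norm ((- (a *\<^sub>R q k + (\<Sum>l\<in>L. \<Psi> l (q k - q l))), b *\<^sub>R p k))
     \<le> (\<bar>a\<bar> + \<bar>b\<bar> + (\<Sum>l\<in>L. K l)) * norm (p k, q k) + (\<Sum>l\<in>L. K l * norm (p l, q l))"
proof -
  have q: "norm (q l) \<le> norm (p l, q l)" and p: "norm (p l) \<le> norm (p l, q l)" for l
    by (rule norm_snd_le, rule norm_fst_le)
  have sum: "norm (\<Sum>l\<in>L. \<Psi> l (q k - q l)) \<le> (\<Sum>l\<in>L. K l * norm (p k, q k) + K l * norm (p l, q l))"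
  proof (rule order_trans[OF norm_sum sum_mono])
    fix l assume l: "l \<in> L"
    have "norm (\<Psi> l (q k - q l)) \<le> K l * norm (q k - q l)"
      by (rule \<Psi>[OF l])
    also have "\<dots> \<le> K l * (norm (p k, q k) + norm (p l, q l))"
      using K[OF l] q[of k] q[of l] norm_triangle_ineq4[of "q k" "q l"] by (intro mult_left_mono) auto
    finally show "norm (\<Psi> l (q k - q l)) \<le> K l * norm (p k, q k) + K l * norm (p l, q l)"
      by (simp add: algebra_simps)
  qed
  have "norm ((- (a *\<^sub>R q k + (\<Sum>l\<in>L. \<Psi> l (q k - q l))), b *\<^sub>R p k))
      \<le> norm (a *\<^sub>R q k + (\<Sum>l\<in>L. \<Psi> l (q k - q l))) + norm (b *\<^sub>R p k)"
    using norm_Pair_le[of "- (a *\<^sub>R q k + (\<Sum>l\<in>L. \<Psi> l (q k - q l)))" "b *\<^sub>R p k"]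
    by (simp only: norm_minus_cancel)
  also have "\<dots> \<le> (\<bar>a\<bar> * norm (q k) + norm (\<Sum>l\<in>L. \<Psi> l (q k - q l))) + \<bar>b\<bar> * norm (p k)"
    using norm_triangle_ineq[of "a *\<^sub>R q k" "\<Sum>l\<in>L. \<Psi> l (q k - q l)"] by simp
  also have "\<dots> \<le> (\<bar>a\<bar> * norm (p k, q k) + (\<Sum>l\<in>L. K l * norm (p k, q k) + K l * norm (p l, q l)))
      + \<bar>b\<bar> * norm (p k, q k)"
    using sum q[of k] p[of k] by (intro add_mono mult_left_mono) auto
  also have "\<dots> = (\<bar>a\<bar> + \<bar>b\<bar> + (\<Sum>l\<in>L. K l)) * norm (p k, q k) + (\<Sum>l\<in>L. K l * norm (p l, q l))"
    by (simp add: sum.distrib sum_distrib_right algebra_simps)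
  finally show ?thesis .
qed

text \<open>The weights \<open>\<kappa> w\<close> dominate the site-to-site Lipschitz constants of the Hamiltonian vector
  field: \<open>CARD('d)\<^sup>2 Cf k l CV\<^sup>2\<close> bounds the Hessian of \<open>V k l\<close>.\<close>

locale lattice_system =
  fixes L :: "nat set" and m \<nu> :: "nat \<Rightarrow> real" and V :: "nat \<Rightarrow> nat \<Rightarrow> real^'d::finite \<Rightarrow> real"
    and Cf :: "nat \<Rightarrow> nat \<Rightarrow> real" and CV :: real and \<Phi> :: "real \<Rightarrow> 'd phase \<Rightarrow> 'd phase"
    and w :: "nat \<Rightarrow> nat \<Rightarrow> real" and \<kappa> S CF :: real
  assumes finite_L: "finite L"
    and smooth: "\<And>k l. k \<in> L \<Longrightarrow> l \<in> L \<Longrightarrow> smooth_fun (V k l)"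
    and V_sym: "\<And>k l x. k \<in> L \<Longrightarrow> l \<in> L \<Longrightarrow> V k l x = V l k (- x)"
    and V_bound: "\<And>k l \<beta> x. k \<in> L \<Longrightarrow> l \<in> L \<Longrightarrow> \<bar>partial_iter \<beta> (V k l) x\<bar> \<le> Cf k l * CV ^ length \<beta>"
    and flow: "is_ham_flow L (hamiltonian L m \<nu> V) \<Phi>"
    and w_nonneg: "\<And>k l. k \<in> L \<Longrightarrow> l \<in> L \<Longrightarrow> 0 \<le> w k l"
    and w_conv: "\<And>k l. k \<in> L \<Longrightarrow> l \<in> L \<Longrightarrow> (\<Sum>j\<in>L. w k j * w j l) \<le> CF * w k l"
    and w_sum: "\<And>k. k \<in> L \<Longrightarrow> (\<Sum>j\<in>L. w k j) \<le> S"
    and CF_pos: "0 < CF" and S_nonneg: "0 \<le> S" and \<kappa>_nonneg: "0 \<le> \<kappa>"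
    and coupling_diag: "\<And>k. k \<in> L \<Longrightarrow>
      \<bar>\<nu> k\<bar> + \<bar>1 / m k\<bar> + (\<Sum>l\<in>L. real CARD('d)^2 * (Cf k l * CV^2)) \<le> \<kappa> / 2 * w k k"
    and coupling: "\<And>k l. k \<in> L \<Longrightarrow> l \<in> L \<Longrightarrow> real CARD('d)^2 * (Cf k l * CV^2) \<le> \<kappa> / 2 * w k l"
begin

abbreviation "G \<equiv> ham_field L m \<nu> V"

lemma coupling_nonneg: "k \<in> L \<Longrightarrow> l \<in> L \<Longrightarrow> 0 \<le> real CARD('d)^2 * (Cf k l * CV^2)"
  using V_bound[of k l "[]" 0] by simp

lemma flow_0: "z \<in> Omega L \<Longrightarrow> \<Phi> 0 z = z"
  using flow by (simp add: is_ham_flow_def)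

lemma flow_site_has_vector_derivative:
  assumes z: "z \<in> Omega L" and k: "k \<in> L"
  shows "((\<lambda>\<tau>. site (\<Phi> \<tau> z) k) has_vector_derivative G (\<Phi> t z) k) (at t)"
proof -
  let ?H = "hamiltonian L m \<nu> V"
  have q: "((\<lambda>s. snd (\<Phi> s z) k) has_vector_derivative (\<chi> i. dp ?H k i (\<Phi> t z))) (at t)"
    and p: "((\<lambda>s. fst (\<Phi> s z) k) has_vector_derivative (\<chi> i. - dq ?H k i (\<Phi> t z))) (at t)"
    using flow z k unfolding is_ham_flow_def by blast+
  moreover have "(\<chi> i. dp ?H k i (\<Phi> t z)) = (1 / m k) *\<^sub>R fst (\<Phi> t z) k"
    by (simp add: vec_eq_iff dp_hamiltonian[OF finite_L k])
  moreover have "(\<chi> i. - dq ?H k i (\<Phi> t z)) = - (\<nu> k *\<^sub>R snd (\<Phi> t z) k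
      + (\<Sum>l\<in>L. gradient (V k l) (snd (\<Phi> t z) k - snd (\<Phi> t z) l)))"
    by (simp add: vec_eq_iff dq_hamiltonian[OF finite_L k smooth V_sym] sum_component gradient_def)
  ultimately show ?thesis
    unfolding site_def ham_field_def using has_vector_derivative_Pair[OF p q] by simp
qed

lemma flow_site_continuous:
  assumes "z \<in> Omega L" and "k \<in> L"
  shows "continuous_on UNIV (\<lambda>\<tau>. snd (\<Phi> \<tau> z) k)"
proof -
  have "continuous_on UNIV (\<lambda>\<tau>. site (\<Phi> \<tau> z) k)"
    using flow_site_has_vector_derivative[OF assms]
    by (meson continuous_at_imp_continuous_on has_vector_derivative_continuous)
  then have "continuous_on UNIV (\<lambda>\<tau>. snd (site (\<Phi> \<tau> z) k))"
    by (intro continuous_intros)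
  then show ?thesis
    by (simp add: site_def)
qed

lemma coupling_weighted_sum_le:
  assumes k: "k \<in> L" and a: "\<And>l. l \<in> L \<Longrightarrow> 0 \<le> a l"
  shows "(\<bar>\<nu> k\<bar> + \<bar>1 / m k\<bar> + (\<Sum>l\<in>L. real CARD('d)^2 * (Cf k l * CV^2))) * a k
      + (\<Sum>l\<in>L. real CARD('d)^2 * (Cf k l * CV^2) * a l) \<le> \<kappa> * (\<Sum>l\<in>L. w k l * a l)"
proof -
  have "(\<bar>\<nu> k\<bar> + \<bar>1 / m k\<bar> + (\<Sum>l\<in>L. real CARD('d)^2 * (Cf k l * CV^2))) * a k
      + (\<Sum>l\<in>L. real CARD('d)^2 * (Cf k l * CV^2) * a l)
      \<le> \<kappa> / 2 * w k k * a k + (\<Sum>l\<in>L. \<kappa> / 2 * w k l * a l)"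
    using coupling_diag[OF k] coupling[OF k] a k by (intro add_mono mult_right_mono sum_mono) auto
  also have "\<kappa> / 2 * w k k * a k \<le> (\<Sum>l\<in>L. \<kappa> / 2 * w k l * a l)"
    using finite_L k w_nonneg[OF k] \<kappa>_nonneg a by (intro member_le_sum) auto
  finally show ?thesis
    by (simp add: sum_distrib_left algebra_simps)
qed

lemma ham_field_lipschitz:
  assumes k: "k \<in> L"
  shows "norm (G z' k - G z k) \<le> \<kappa> * (\<Sum>l\<in>L. w k l * norm (site z' l - site z l))"
proof -
  define p where "p l = fst z' l - fst z l" for l
  define q where "q l = snd z' l - snd z l" for l
  define \<Psi> where "\<Psi> l h = gradient (V k l) ((snd z k - snd z l) + h) - gradient (V k l) (snd z k - snd z l)"
    for l h
  have "(snd z k - snd z l) + (q k - q l) = snd z' k - snd z' l" for l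
    by (simp add: q_def algebra_simps)
  then have "G z' k - G z k = (- (\<nu> k *\<^sub>R q k + (\<Sum>l\<in>L. \<Psi> l (q k - q l))), (1 / m k) *\<^sub>R p k)"
    by (simp add: ham_field_def \<Psi>_def p_def q_def sum_subtractf algebra_simps)
  also have "norm \<dots> \<le> (\<bar>\<nu> k\<bar> + \<bar>1 / m k\<bar> + (\<Sum>l\<in>L. real CARD('d)^2 * (Cf k l * CV^2))) * norm (p k, q k)
      + (\<Sum>l\<in>L. real CARD('d)^2 * (Cf k l * CV^2) * norm (p l, q l))"
  proof (rule norm_site_field_le[OF finite_L, where \<Psi> = \<Psi>])
    show "norm (\<Psi> l h) \<le> real CARD('d)^2 * (Cf k l * CV^2) * norm h" if "l \<in> L" for l h
      unfolding \<Psi>_def by (rule gradient_lipschitz[OF smooth[OF k that] V_bound[OF k that]])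
  qed (rule coupling_nonneg[OF k])
  also have "\<dots> \<le> \<kappa> * (\<Sum>l\<in>L. w k l * norm (p l, q l))"
    by (rule coupling_weighted_sum_le[OF k]) simp
  finally show ?thesis
    by (simp add: site_diff p_def q_def)
qed

lemma flow_site_diff_le:
  assumes z: "z \<in> Omega L" and z': "z' \<in> Omega L" and y: "y \<in> L" and "0 \<le> \<sigma>"
    and init: "\<And>k. k \<in> L \<Longrightarrow> norm (site z' k - site z k) \<le> \<sigma> * (if k = y then 1 else 0)"
    and k: "k \<in> L"
  shows "norm (site (\<Phi> t z') k - site (\<Phi> t z) k) \<le> \<sigma> * lr_weight \<kappa> CF w y k \<bar>t\<bar>"
proof (rule lieb_robinson_gronwall[OF finite_L y \<kappa>_nonneg CF_pos S_nonneg \<open>0 \<le> \<sigma>\<close> w_nonneg w_conv w_sum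
      _ _ _ k, where u' = "\<lambda>k \<tau>. G (\<Phi> \<tau> z') k - G (\<Phi> \<tau> z) k"])
  fix k \<tau> assume k: "k \<in> L"
  show "((\<lambda>\<tau>. site (\<Phi> \<tau> z') k - site (\<Phi> \<tau> z) k) has_vector_derivative G (\<Phi> \<tau> z') k - G (\<Phi> \<tau> z) k) (at \<tau>)"
    by (intro has_vector_derivative_diff flow_site_has_vector_derivative z z' k)
  show "norm (G (\<Phi> \<tau> z') k - G (\<Phi> \<tau> z) k) \<le> \<kappa> * (\<Sum>l\<in>L. w k l * norm (site (\<Phi> \<tau> z') l - site (\<Phi> \<tau> z) l))"
    by (rule ham_field_lipschitz[OF k])
  show "norm (site (\<Phi> 0 z') k - site (\<Phi> 0 z) k) \<le> \<sigma> * (if k = y then 1 else 0)"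
    using init[OF k] by (simp add: flow_0 z z')
qed

definition lin_field :: "'d phase \<Rightarrow> nat \<Rightarrow> (nat \<Rightarrow> (real^'d) \<times> (real^'d)) \<Rightarrow> (real^'d) \<times> (real^'d)" where
  "lin_field Y k D = (- (\<nu> k *\<^sub>R snd (D k)
      + (\<Sum>l\<in>L. hessian (V k l) (snd Y k - snd Y l) *v (snd (D k) - snd (D l)))), (1 / m k) *\<^sub>R fst (D k))"

lemma lin_field_bound:
  assumes k: "k \<in> L"
  shows "norm (lin_field Y k D) \<le> \<kappa> * (\<Sum>l\<in>L. w k l * norm (D l))"
proof -
  have "norm (lin_field Y k D) \<le> (\<bar>\<nu> k\<bar> + \<bar>1 / m k\<bar> + (\<Sum>l\<in>L. real CARD('d)^2 * (Cf k l * CV^2)))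
      * norm (fst (D k), snd (D k)) + (\<Sum>l\<in>L. real CARD('d)^2 * (Cf k l * CV^2) * norm (fst (D l), snd (D l)))"
    unfolding lin_field_def
  proof (rule norm_site_field_le[OF finite_L, where \<Psi> = "\<lambda>l h. hessian (V k l) (snd Y k - snd Y l) *v h"])
    show "norm (hessian (V k l) (snd Y k - snd Y l) *v h) \<le> real CARD('d)^2 * (Cf k l * CV^2) * norm h"
      if "l \<in> L" for l h
      by (rule norm_hessian_mult_le[OF V_bound[OF k that]])
  qed (rule coupling_nonneg[OF k])
  also have "\<dots> \<le> \<kappa> * (\<Sum>l\<in>L. w k l * norm (D l))"
    using coupling_weighted_sum_le[OF k, of "\<lambda>l. norm (D l)"] by simp
  finally show ?thesis .
qed

lemma lin_field_diff:
  "lin_field Y k (\<lambda>l. a *\<^sub>R D1 l - b *\<^sub>R D2 l) = a *\<^sub>R lin_field Y k D1 - b *\<^sub>R lin_field Y k D2"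
proof -
  let ?M = "\<lambda>l. hessian (V k l) (snd Y k - snd Y l)"
  have "?M l *v (snd (a *\<^sub>R D1 k - b *\<^sub>R D2 k) - snd (a *\<^sub>R D1 l - b *\<^sub>R D2 l))
     = a *\<^sub>R (?M l *v (snd (D1 k) - snd (D1 l))) - b *\<^sub>R (?M l *v (snd (D2 k) - snd (D2 l)))" for l
    by (simp add: matrix_vector_mult_diff_distrib matrix_vector_mult_scaleR algebra_simps)
  then have "(\<Sum>l\<in>L. ?M l *v (snd (a *\<^sub>R D1 k - b *\<^sub>R D2 k) - snd (a *\<^sub>R D1 l - b *\<^sub>R D2 l)))
     = a *\<^sub>R (\<Sum>l\<in>L. ?M l *v (snd (D1 k) - snd (D1 l))) - b *\<^sub>R (\<Sum>l\<in>L. ?M l *v (snd (D2 k) - snd (D2 l)))"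
    by (simp add: sum_subtractf scaleR_sum_right)
  then show ?thesis
    unfolding lin_field_def by (simp add: algebra_simps)
qed

definition field_remainder :: "'d phase \<Rightarrow> 'd phase \<Rightarrow> nat \<Rightarrow> nat \<Rightarrow> real^'d" where
  "field_remainder Y Y' k l =
    (let a = snd Y k - snd Y l; h = (snd Y' k - snd Y k) - (snd Y' l - snd Y l)
     in gradient (V k l) (a + h) - gradient (V k l) a - hessian (V k l) a *v h)"

lemma ham_field_linearization:
  "G Y' k - G Y k = lin_field Y k (\<lambda>l. site Y' l - site Y l) + (- (\<Sum>l\<in>L. field_remainder Y Y' k l), 0)"
proof -
  have "(snd Y k - snd Y l) + ((snd Y' k - snd Y k) - (snd Y' l - snd Y l)) = snd Y' k - snd Y' l" for l
    by (simp add: algebra_simps)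
  then show ?thesis
    by (simp add: ham_field_def lin_field_def field_remainder_def Let_def site_def sum_subtractf
        sum.distrib algebra_simps)
qed

lemma flow_site_diffs_compact:
  assumes "z \<in> Omega L"
  shows "compact (\<Union>(k, l)\<in>L \<times> L. (\<lambda>\<tau>. snd (\<Phi> \<tau> z) k - snd (\<Phi> \<tau> z) l) ` {-T..T})"
proof -
  have "compact ((\<lambda>\<tau>. snd (\<Phi> \<tau> z) k - snd (\<Phi> \<tau> z) l) ` {-T..T})" if "k \<in> L" "l \<in> L" for k l
    using flow_site_continuous[OF assms that(1)] flow_site_continuous[OF assms that(2)]
    by (intro compact_continuous_image continuous_on_diff) (auto intro: continuous_on_subset)
  then show ?thesis
    using finite_L by (intro compact_UN) auto
qed

end

section \<open>Differentiability of the flow in the initial data\<close>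

lemma ex_pos_radius_finite:
  assumes "finite A" and "\<And>a. a \<in> A \<Longrightarrow> \<exists>d>0. \<forall>h::'b::real_normed_vector. norm h < d \<longrightarrow> Q a h"
  shows "\<exists>d>0. \<forall>a\<in>A. \<forall>h. norm h < d \<longrightarrow> Q a h"
  using assms
proof (induction A rule: finite_induct)
  case empty
  then show ?case
    by (intro exI[of _ 1]) simp
next
  case (insert x A)
  then obtain d1 where "0 < d1" "\<forall>a\<in>A. \<forall>h. norm h < d1 \<longrightarrow> Q a h"
    by blast
  moreover obtain d2 where "0 < d2" "\<forall>h. norm h < d2 \<longrightarrow> Q x h"
    using insert(4)[of x] by blast
  ultimately show ?case
    by (intro exI[of _ "min d1 d2"]) auto
qed

lemma (in lattice_system) gradient_linearization_uniform_sites: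
  assumes "compact Q" and "0 < e"
  obtains d where "0 < d" and "\<And>k l h a. k \<in> L \<Longrightarrow> l \<in> L \<Longrightarrow> norm h < d \<Longrightarrow> a \<in> Q \<Longrightarrow>
      norm (gradient (V k l) (a + h) - gradient (V k l) a - hessian (V k l) a *v h) \<le> e * norm h"
proof -
  have "\<exists>d>0. \<forall>p\<in>L \<times> L. \<forall>h::real^'d. norm h < d \<longrightarrow> (\<forall>a\<in>Q.
      norm (gradient (V (fst p) (snd p)) (a + h) - gradient (V (fst p) (snd p)) a
        - hessian (V (fst p) (snd p)) a *v h) \<le> e * norm h)"
  proof (rule ex_pos_radius_finite)
    fix p assume "p \<in> L \<times> L"
    then have "fst p \<in> L" "snd p \<in> L"
      by auto
    from gradient_linearization_uniform[OF smooth[OF this] assms]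
    show "\<exists>d>0. \<forall>h::real^'d. norm h < d \<longrightarrow> (\<forall>a\<in>Q.
        norm (gradient (V (fst p) (snd p)) (a + h) - gradient (V (fst p) (snd p)) a
          - hessian (V (fst p) (snd p)) a *v h) \<le> e * norm h)"
      by blast
  qed (use finite_L in simp)
  then show ?thesis
    using that by fastforce
qed

lemma ex_tendsto_at_if_cauchy:
  fixes f :: "'a::{perfect_space, metric_space} \<Rightarrow> 'b::complete_space"
  assumes "\<And>e. 0 < e \<Longrightarrow> \<exists>d>0. \<forall>s r. s \<noteq> a \<longrightarrow> r \<noteq> a \<longrightarrow> dist s a < d \<longrightarrow> dist r a < d \<longrightarrow>
      dist (f s) (f r) < e"
  shows "\<exists>v. (f \<longlongrightarrow> v) (at a)"
proof -
  have "cauchy_filter (filtermap f (at a))"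
    unfolding cauchy_filter_metric_filtermap
  proof (intro allI impI)
    fix e :: real
    assume "0 < e"
    then obtain d where "0 < d" and d: "\<forall>s r. s \<noteq> a \<longrightarrow> r \<noteq> a \<longrightarrow> dist s a < d \<longrightarrow> dist r a < d \<longrightarrow>
        dist (f s) (f r) < e"
      using assms by blast
    have "eventually (\<lambda>s. s \<noteq> a \<and> dist s a < d) (at a)"
      unfolding eventually_at using \<open>0 < d\<close> by auto
    then show "\<exists>P. eventually P (at a) \<and> (\<forall>x y. P x \<and> P y \<longrightarrow> dist (f x) (f y) < e)"
      using d by blast
  qed
  moreover have "filtermap f (at a) \<noteq> bot"
    by (simp add: filtermap_bot_iff)
  ultimately have "\<exists>v. filtermap f (at a) \<le> nhds v"
    by (intro cauchy_filter_complete_converges[OF _ complete_UNIV]) auto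
  then show ?thesis
    unfolding filterlim_def by blast
qed

locale flow_perturbation = lattice_system L m \<nu> V Cf CV \<Phi> w \<kappa> S CF
  for L m \<nu> and V :: "nat \<Rightarrow> nat \<Rightarrow> real^'d::finite \<Rightarrow> real" and Cf CV \<Phi> w \<kappa> S CF +
  fixes z :: "'d phase" and y :: nat and zs :: "real \<Rightarrow> 'd phase"
    and E :: "nat \<Rightarrow> (real^'d) \<times> (real^'d)"
  assumes z: "z \<in> Omega L" and y: "y \<in> L"
    and zs: "\<And>s. zs s \<in> Omega L" and zs_0: "zs 0 = z"
    and zs_site: "\<And>s l. site (zs s) l - site z l = s *\<^sub>R E l"
    and E: "\<And>l. l \<in> L \<Longrightarrow> norm (E l) \<le> (if l = y then 1 else 0)"
begin

definition increment :: "real \<Rightarrow> nat \<Rightarrow> real \<Rightarrow> (real^'d) \<times> (real^'d)" where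
  "increment s k \<tau> = site (\<Phi> \<tau> (zs s)) k - site (\<Phi> \<tau> z) k"

lemma increment_le: "k \<in> L \<Longrightarrow> norm (increment s k \<tau>) \<le> \<bar>s\<bar> * lr_weight \<kappa> CF w y k \<bar>\<tau>\<bar>"
  unfolding increment_def
  by (rule flow_site_diff_le[OF z zs y]) (use E in \<open>auto simp: zs_site mult_left_mono\<close>)

lemma increment_le_uniform:
  assumes k: "k \<in> L" and \<tau>: "\<bar>\<tau>\<bar> \<le> T"
  shows "norm (increment s k \<tau>) \<le> \<bar>s\<bar> * (1 + (exp (\<kappa> * CF * T) - 1) / CF * S)"
proof -
  have "w k y \<le> (\<Sum>j\<in>L. w k j)"
    using finite_L w_nonneg[OF k] y by (intro member_le_sum) auto
  then have "lr_weight \<kappa> CF w y k \<bar>\<tau>\<bar> \<le> 1 + (exp (\<kappa> * CF * T) - 1) / CF * S"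
    using w_sum[OF k] w_nonneg[OF k y] \<tau> \<kappa>_nonneg CF_pos by (intro lr_weight_le) auto
  then show ?thesis
    using increment_le[OF k, of s \<tau>] by (meson abs_ge_zero mult_left_mono order_trans)
qed

lemma increment_has_vector_derivative:
  assumes "k \<in> L"
  shows "(increment \<sigma> k has_vector_derivative
    lin_field (\<Phi> \<tau> z) k (\<lambda>l. increment \<sigma> l \<tau>) + (- (\<Sum>l\<in>L. field_remainder (\<Phi> \<tau> z) (\<Phi> \<tau> (zs \<sigma>)) k l), 0))
    (at \<tau>)"
proof -
  have "(increment \<sigma> k has_vector_derivative G (\<Phi> \<tau> (zs \<sigma>)) k - G (\<Phi> \<tau> z) k) (at \<tau>)"
    unfolding increment_def by (intro has_vector_derivative_diff flow_site_has_vector_derivative zs z assms)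
  then show ?thesis
    unfolding increment_def ham_field_linearization .
qed

lemma field_remainder_small:
  assumes "0 < e" and "0 \<le> T"
  shows "\<exists>d>0. \<forall>\<sigma> \<tau> k. k \<in> L \<longrightarrow> \<bar>\<tau>\<bar> \<le> T \<longrightarrow> \<bar>\<sigma>\<bar> < d \<longrightarrow>
      norm (\<Sum>l\<in>L. field_remainder (\<Phi> \<tau> z) (\<Phi> \<tau> (zs \<sigma>)) k l) \<le> e * \<bar>\<sigma>\<bar>"
proof -
  define M where "M = 1 + (exp (\<kappa> * CF * T) - 1) / CF * S"
  have "1 \<le> M"
    using \<kappa>_nonneg CF_pos S_nonneg \<open>0 \<le> T\<close> by (simp add: M_def)
  define e' where "e' = e / (2 * M * (real (card L) + 1))"
  have "0 < e'"
    using \<open>0 < e\<close> \<open>1 \<le> M\<close> by (simp add: e'_def)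
  define Q where "Q = (\<Union>(k, l)\<in>L \<times> L. (\<lambda>\<tau>. snd (\<Phi> \<tau> z) k - snd (\<Phi> \<tau> z) l) ` {-T..T})"
  obtain d where "0 < d" and lin: "\<And>k l h a. k \<in> L \<Longrightarrow> l \<in> L \<Longrightarrow> norm h < d \<Longrightarrow> a \<in> Q \<Longrightarrow>
      norm (gradient (V k l) (a + h) - gradient (V k l) a - hessian (V k l) a *v h) \<le> e' * norm h"
    using gradient_linearization_uniform_sites[OF flow_site_diffs_compact[OF z] \<open>0 < e'\<close>]
    unfolding Q_def by blast
  have "norm (\<Sum>l\<in>L. field_remainder (\<Phi> \<tau> z) (\<Phi> \<tau> (zs \<sigma>)) k l) \<le> e * \<bar>\<sigma>\<bar>"
    if k: "k \<in> L" and \<tau>: "\<bar>\<tau>\<bar> \<le> T" and \<sigma>: "\<bar>\<sigma>\<bar> < d / (2 * M)" for \<sigma> \<tau> k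
  proof -
    have "norm (field_remainder (\<Phi> \<tau> z) (\<Phi> \<tau> (zs \<sigma>)) k l) \<le> e' * (2 * \<bar>\<sigma>\<bar> * M)" if l: "l \<in> L" for l
    proof -
      define a where "a = snd (\<Phi> \<tau> z) k - snd (\<Phi> \<tau> z) l"
      define h where "h = (snd (\<Phi> \<tau> (zs \<sigma>)) k - snd (\<Phi> \<tau> z) k) - (snd (\<Phi> \<tau> (zs \<sigma>)) l - snd (\<Phi> \<tau> z) l)"
      have bound: "norm (snd (\<Phi> \<tau> (zs \<sigma>)) j - snd (\<Phi> \<tau> z) j) \<le> \<bar>\<sigma>\<bar> * M" if "j \<in> L" for j
        using norm_snd_le[of "snd (\<Phi> \<tau> (zs \<sigma>)) j - snd (\<Phi> \<tau> z) j" "fst (\<Phi> \<tau> (zs \<sigma>)) j - fst (\<Phi> \<tau> z) j"]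
          increment_le_uniform[OF that \<tau>, of \<sigma>]
        unfolding increment_def site_diff M_def by linarith
      have "norm h \<le> norm (snd (\<Phi> \<tau> (zs \<sigma>)) k - snd (\<Phi> \<tau> z) k) + norm (snd (\<Phi> \<tau> (zs \<sigma>)) l - snd (\<Phi> \<tau> z) l)"
        unfolding h_def by (rule norm_triangle_ineq4)
      then have "norm h \<le> 2 * \<bar>\<sigma>\<bar> * M"
        using bound[OF k] bound[OF l] by linarith
      moreover have "2 * \<bar>\<sigma>\<bar> * M < d"
        using \<sigma> \<open>1 \<le> M\<close> by (simp add: field_simps)
      moreover have "a \<in> Q"
        unfolding Q_def a_def using k l \<tau> by (intro UN_I[of "(k, l)"]) (auto intro!: image_eqI[where x = \<tau>])
      moreover have "field_remainder (\<Phi> \<tau> z) (\<Phi> \<tau> (zs \<sigma>)) k l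
          = gradient (V k l) (a + h) - gradient (V k l) a - hessian (V k l) a *v h"
        unfolding field_remainder_def Let_def a_def h_def ..
      ultimately have "norm (field_remainder (\<Phi> \<tau> z) (\<Phi> \<tau> (zs \<sigma>)) k l) \<le> e' * norm h"
        using lin[OF k l] by simp
      also have "\<dots> \<le> e' * (2 * \<bar>\<sigma>\<bar> * M)"
        using \<open>norm h \<le> 2 * \<bar>\<sigma>\<bar> * M\<close> \<open>0 < e'\<close> by (intro mult_left_mono) auto
      finally show ?thesis .
    qed
    then have "norm (\<Sum>l\<in>L. field_remainder (\<Phi> \<tau> z) (\<Phi> \<tau> (zs \<sigma>)) k l) \<le> (\<Sum>l\<in>L. e' * (2 * \<bar>\<sigma>\<bar> * M))"
      by (intro order_trans[OF norm_sum sum_mono])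
    also have "\<dots> = real (card L) * (e' * (2 * \<bar>\<sigma>\<bar> * M))"
      by simp
    also have "\<dots> \<le> (real (card L) + 1) * (e' * (2 * \<bar>\<sigma>\<bar> * M))"
      using \<open>0 < e'\<close> \<open>1 \<le> M\<close> by (intro mult_right_mono) auto
    also have "\<dots> = \<bar>\<sigma>\<bar> * (e' * (2 * M * (real (card L) + 1)))"
      by (simp add: algebra_simps)
    also have "e' * (2 * M * (real (card L) + 1)) = e"
      using \<open>1 \<le> M\<close> by (simp add: e'_def)
    finally show ?thesis
      by (simp add: mult.commute)
  qed
  then show ?thesis
    using \<open>0 < d\<close> \<open>1 \<le> M\<close> by (intro exI[of _ "d / (2 * M)"]) auto
qed

lemma difference_quotients_cauchy:
  assumes "0 < e"
  shows "\<exists>d>0. \<forall>s r. s \<noteq> 0 \<longrightarrow> r \<noteq> 0 \<longrightarrow> \<bar>s\<bar> < d \<longrightarrow> \<bar>r\<bar> < d \<longrightarrow>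
      (\<forall>k\<in>L. dist ((1 / s) *\<^sub>R increment s k t) ((1 / r) *\<^sub>R increment r k t) < e)"
proof -
  define X where "X = exp ((\<kappa> * S + 1) * \<bar>t\<bar>)"
  have "0 < X"
    by (simp add: X_def)
  obtain d where "0 < d" and small: "\<And>\<sigma> \<tau> k. k \<in> L \<Longrightarrow> \<bar>\<tau>\<bar> \<le> \<bar>t\<bar> \<Longrightarrow> \<bar>\<sigma>\<bar> < d \<Longrightarrow>
      norm (\<Sum>l\<in>L. field_remainder (\<Phi> \<tau> z) (\<Phi> \<tau> (zs \<sigma>)) k l) \<le> e / (4 * X) * \<bar>\<sigma>\<bar>"
    using field_remainder_small[of "e / (4 * X)" "\<bar>t\<bar>"] \<open>0 < e\<close> \<open>0 < X\<close> by auto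
  have "dist ((1 / s) *\<^sub>R increment s k t) ((1 / r) *\<^sub>R increment r k t) < e"
    if "s \<noteq> 0" "r \<noteq> 0" "\<bar>s\<bar> < d" "\<bar>r\<bar> < d" and k: "k \<in> L" for s r k
  proof -
    define u where "u k \<tau> = (1 / s) *\<^sub>R increment s k \<tau> - (1 / r) *\<^sub>R increment r k \<tau>" for k \<tau>
    define R where "R \<sigma> \<tau> k = (- (\<Sum>l\<in>L. field_remainder (\<Phi> \<tau> z) (\<Phi> \<tau> (zs \<sigma>)) k l), 0::real^'d)" for \<sigma> \<tau> k
    have R: "norm ((1 / \<sigma>) *\<^sub>R R \<sigma> \<tau> k) \<le> e / (4 * X)"
      if "\<sigma> \<noteq> 0" "\<bar>\<sigma>\<bar> < d" "k \<in> L" "\<bar>\<tau>\<bar> \<le> \<bar>t\<bar>" for \<sigma> \<tau> k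
    proof -
      have "norm ((1 / \<sigma>) *\<^sub>R R \<sigma> \<tau> k) = norm (R \<sigma> \<tau> k) / \<bar>\<sigma>\<bar>"
        by simp
      also have "\<dots> \<le> e / (4 * X)"
        using small[OF that(3,4,2)] that(1) by (simp add: R_def pos_divide_le_eq)
      finally show ?thesis .
    qed
    define \<eta> where "\<eta> = e / (4 * X) + e / (4 * X)"
    have "norm (u k t) \<le> \<eta> * exp ((\<kappa> * S + 1) * \<bar>t\<bar>)"
    proof (rule linear_gronwall_abs[OF finite_L \<kappa>_nonneg S_nonneg _ w_nonneg w_sum _ _ _ k order_refl,
          where u' = "\<lambda>k \<tau>. lin_field (\<Phi> \<tau> z) k (\<lambda>l. u l \<tau>) + ((1 / s) *\<^sub>R R s \<tau> k - (1 / r) *\<^sub>R R r \<tau> k)"])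
      show "0 \<le> \<eta>"
        using \<open>0 < e\<close> \<open>0 < X\<close> by (simp add: \<eta>_def)
      fix k \<tau> assume k: "k \<in> L"
      have "(increment \<sigma> k has_vector_derivative
          lin_field (\<Phi> \<tau> z) k (\<lambda>l. increment \<sigma> l \<tau>) + R \<sigma> \<tau> k) (at \<tau>)" for \<sigma>
        unfolding R_def by (rule increment_has_vector_derivative[OF k])
      from has_vector_derivative_diff[OF
          bounded_linear.has_vector_derivative[OF bounded_linear_scaleR_right this, of "1 / s" s]
          bounded_linear.has_vector_derivative[OF bounded_linear_scaleR_right this, of "1 / r" r]]
      show "(u k has_vector_derivative
          lin_field (\<Phi> \<tau> z) k (\<lambda>l. u l \<tau>) + ((1 / s) *\<^sub>R R s \<tau> k - (1 / r) *\<^sub>R R r \<tau> k)) (at \<tau>)"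
        unfolding u_def lin_field_diff by (simp add: scaleR_right_distrib algebra_simps)
      assume "\<bar>\<tau>\<bar> \<le> \<bar>t\<bar>"
      have "norm (lin_field (\<Phi> \<tau> z) k (\<lambda>l. u l \<tau>) + ((1 / s) *\<^sub>R R s \<tau> k - (1 / r) *\<^sub>R R r \<tau> k))
          \<le> norm (lin_field (\<Phi> \<tau> z) k (\<lambda>l. u l \<tau>)) + (norm ((1 / s) *\<^sub>R R s \<tau> k) + norm ((1 / r) *\<^sub>R R r \<tau> k))"
        by (rule order_trans[OF norm_triangle_ineq add_left_mono[OF norm_triangle_ineq4]])
      also have "\<dots> \<le> \<kappa> * (\<Sum>l\<in>L. w k l * norm (u l \<tau>)) + \<eta>"
        unfolding \<eta>_def using \<open>\<bar>\<tau>\<bar> \<le> \<bar>t\<bar>\<close>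
        by (intro add_mono lin_field_bound[OF k] R k) (simp_all add: that)
      finally show "norm (lin_field (\<Phi> \<tau> z) k (\<lambda>l. u l \<tau>) + ((1 / s) *\<^sub>R R s \<tau> k - (1 / r) *\<^sub>R R r \<tau> k))
          \<le> \<kappa> * (\<Sum>l\<in>L. w k l * norm (u l \<tau>)) + \<eta>" .
    next
      fix k assume "k \<in> L"
      show "u k 0 = 0"
        using \<open>s \<noteq> 0\<close> \<open>r \<noteq> 0\<close> by (simp add: u_def increment_def flow_0 zs z zs_site)
    qed
    also have "\<dots> = e / 2"
      unfolding \<eta>_def X_def[symmetric] using \<open>0 < X\<close> by (simp add: field_simps)
    also have "\<dots> < e"
      using \<open>0 < e\<close> by simp
    finally show ?thesis
      by (simp add: dist_norm u_def)
  qed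
  then show ?thesis
    using \<open>0 < d\<close> by blast
qed

lemma increment_quotient_tendsto:
  obtains v where "\<And>k. k \<in> L \<Longrightarrow> ((\<lambda>s. (1 / s) *\<^sub>R increment s k t) \<longlongrightarrow> v k) (at 0)"
    and "\<And>k. k \<in> L \<Longrightarrow> norm (v k) \<le> lr_weight \<kappa> CF w y k \<bar>t\<bar>"
proof -
  have "\<exists>v. ((\<lambda>s. (1 / s) *\<^sub>R increment s k t) \<longlongrightarrow> v) (at 0)" if k: "k \<in> L" for k
  proof (rule ex_tendsto_at_if_cauchy)
    fix e :: real
    assume "0 < e"
    then obtain d where "0 < d" and d: "\<forall>s r. s \<noteq> 0 \<longrightarrow> r \<noteq> 0 \<longrightarrow> \<bar>s\<bar> < d \<longrightarrow> \<bar>r\<bar> < d \<longrightarrow>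
        (\<forall>k\<in>L. dist ((1 / s) *\<^sub>R increment s k t) ((1 / r) *\<^sub>R increment r k t) < e)"
      using difference_quotients_cauchy by blast
    then show "\<exists>d>0. \<forall>s r. s \<noteq> 0 \<longrightarrow> r \<noteq> 0 \<longrightarrow> dist s 0 < d \<longrightarrow> dist r 0 < d \<longrightarrow>
        dist ((1 / s) *\<^sub>R increment s k t) ((1 / r) *\<^sub>R increment r k t) < e"
      using k by (intro exI[of _ d]) (simp add: dist_real_def)
  qed
  then have "\<forall>k\<in>L. \<exists>v. ((\<lambda>s. (1 / s) *\<^sub>R increment s k t) \<longlongrightarrow> v) (at 0)"
    by blast
  from bchoice[OF this] obtain v where v: "\<And>k. k \<in> L \<Longrightarrow> ((\<lambda>s. (1 / s) *\<^sub>R increment s k t) \<longlongrightarrow> v k) (at 0)"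
    by blast
  moreover have "norm (v k) \<le> lr_weight \<kappa> CF w y k \<bar>t\<bar>" if k: "k \<in> L" for k
  proof (rule Lim_norm_ubound[OF at_neq_bot v[OF k]])
    have "norm ((1 / s) *\<^sub>R increment s k t) \<le> lr_weight \<kappa> CF w y k \<bar>t\<bar>" if "s \<noteq> 0" for s
      using increment_le[OF k, of s t] that by (simp add: pos_divide_le_eq mult.commute)
    then show "\<forall>\<^sub>F s in at 0. norm ((1 / s) *\<^sub>R increment s k t) \<le> lr_weight \<kappa> CF w y k \<bar>t\<bar>"
      by (auto simp: eventually_at_filter)
  qed
  ultimately show ?thesis
    using that by blast
qed

end

section \<open>Mean values and the chain rule for \<open>C\<^sup>1\<close> functions on phase space\<close>

text \<open>A coordinate \<open>(k, i, b)\<close> of phase space is component \<open>i\<close> of the momentum (\<open>b\<close>) or of the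
  position (\<open>\<not> b\<close>) of particle \<open>k\<close>.\<close>

definition coord :: "nat \<times> 'd \<times> bool \<Rightarrow> 'd::finite phase \<Rightarrow> real" where
  "coord c z = (case c of (k, i, b) \<Rightarrow> if b then fst z k $ i else snd z k $ i)"

definition coord_line :: "nat \<times> 'd \<times> bool \<Rightarrow> 'd::finite phase \<Rightarrow> real \<Rightarrow> 'd phase" where
  "coord_line c z s = (case c of (k, i, b) \<Rightarrow>
     if b then ((fst z)(k := fst z k + s *\<^sub>R axis i 1), snd z)
     else (fst z, (snd z)(k := snd z k + s *\<^sub>R axis i 1)))"

definition coord_partial :: "('d::finite phase \<Rightarrow> real) \<Rightarrow> nat \<times> 'd \<times> bool \<Rightarrow> 'd phase \<Rightarrow> real" where
  "coord_partial h c z = (case c of (k, i, b) \<Rightarrow> if b then dp h k i z else dq h k i z)"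

definition coord_mix :: "(nat \<times> 'd \<times> bool) set \<Rightarrow> 'd::finite phase \<Rightarrow> 'd phase \<Rightarrow> 'd phase" where
  "coord_mix A z w = ((\<lambda>k. \<chi> i. if (k, i, True) \<in> A then fst w k $ i else fst z k $ i),
                      (\<lambda>k. \<chi> i. if (k, i, False) \<in> A then snd w k $ i else snd z k $ i))"

lemma coord_line_0 [simp]: "coord_line c z 0 = z"
  by (cases c) (auto simp: coord_line_def)

lemma coord_line_add: "coord_line c (coord_line c z s0) s = coord_line c z (s0 + s)"
  by (cases c) (auto simp: coord_line_def fun_eq_iff algebra_simps scaleR_add_left)

lemma coord_line_in_Omega: "z \<in> Omega X \<Longrightarrow> c \<in> X \<times> UNIV \<times> UNIV \<Longrightarrow> coord_line c z s \<in> Omega X"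
  by (auto simp: coord_line_def Omega_def)

lemma coord_mix_empty [simp]: "coord_mix {} z w = z"
  by (simp add: coord_mix_def vec_eq_iff)

lemma coord_mix_all: "z \<in> Omega X \<Longrightarrow> w \<in> Omega X \<Longrightarrow> coord_mix (X \<times> UNIV \<times> UNIV) z w = w"
  by (auto simp: coord_mix_def Omega_def vec_eq_iff fun_eq_iff prod_eq_iff)

lemma coord_mix_insert:
  "c \<notin> A \<Longrightarrow> coord_mix (insert c A) z w = coord_line c (coord_mix A z w) (coord c w - coord c z)"
  by (cases c) (auto simp: coord_mix_def coord_line_def coord_def fun_eq_iff vec_eq_iff axis_def)

lemma coord_mix_in_Omega: "z \<in> Omega X \<Longrightarrow> w \<in> Omega X \<Longrightarrow> coord_mix A z w \<in> Omega X"
  by (auto simp: coord_mix_def Omega_def vec_eq_iff)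

lemma sum_coords:
  fixes g :: "nat \<times> 'd::finite \<times> bool \<Rightarrow> real"
  assumes "finite X"
  shows "(\<Sum>c\<in>X \<times> UNIV \<times> UNIV. g c) = (\<Sum>x\<in>X. \<Sum>i\<in>UNIV. g (x, i, True) + g (x, i, False))"
proof -
  have "(\<Sum>c\<in>X \<times> UNIV \<times> UNIV. g c) = (\<Sum>x\<in>X. \<Sum>i\<in>UNIV. \<Sum>b\<in>UNIV. g (x, i, b))"
    by (simp add: sum.cartesian_product)
  also have "\<dots> = (\<Sum>x\<in>X. \<Sum>i\<in>UNIV. g (x, i, True) + g (x, i, False))"
    by (simp add: UNIV_bool ac_simps)
  finally show ?thesis .
qed

lemma C1_Omega_coord_line_deriv:
  fixes h :: "'d::finite phase \<Rightarrow> real"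
  assumes h: "C1_Omega X h" and z: "z \<in> Omega X" and c: "c \<in> X \<times> UNIV \<times> UNIV"
  shows "((\<lambda>s. h (coord_line c z s)) has_real_derivative coord_partial h c (coord_line c z s0)) (at s0)"
proof -
  have at_0: "((\<lambda>s. h (coord_line c z' s)) has_real_derivative coord_partial h c z') (at 0)"
    if "z' \<in> Omega X" for z'
  proof -
    obtain k i b where c_eq: "c = (k, i, b)"
      by (cases c)
    have "(\<lambda>s. h (coord_line c z' s)) differentiable (at 0)"
      using h that c unfolding C1_Omega_def c_eq coord_line_def by (cases b) auto
    then obtain D where D: "((\<lambda>s. h (coord_line c z' s)) has_real_derivative D) (at 0)"
      by (auto simp: real_differentiable_def)
    moreover have "coord_partial h c z' = D"
      using D unfolding coord_partial_def dp_def dq_def c_eq coord_line_def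
      by (cases b) (auto simp: DERIV_imp_deriv)
    ultimately show ?thesis
      by simp
  qed
  have "((\<lambda>s. h (coord_line c z (s + s0))) has_real_derivative coord_partial h c (coord_line c z s0)) (at 0)"
    using at_0[OF coord_line_in_Omega[OF z c, of s0]] by (simp add: coord_line_add add.commute)
  then show ?thesis
    using DERIV_shift[of "\<lambda>s. h (coord_line c z s)" _ 0 s0] by simp
qed

lemma omega_dist_mono:
  assumes "\<And>k i. k \<in> X \<Longrightarrow> \<bar>(fst a k - fst z k) $ i\<bar> \<le> \<bar>(fst w k - fst z k) $ i\<bar>"
    and "\<And>k i. k \<in> X \<Longrightarrow> \<bar>(snd a k - snd z k) $ i\<bar> \<le> \<bar>(snd w k - snd z k) $ i\<bar>"
  shows "omega_dist X a z \<le> omega_dist X w z"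
  unfolding omega_dist_def
proof (intro real_sqrt_le_mono sum_mono add_mono power_mono)
  fix k assume "k \<in> X"
  then show "norm (fst a k - fst z k) \<le> norm (fst w k - fst z k)"
    and "norm (snd a k - snd z k) \<le> norm (snd w k - snd z k)"
    using assms by (auto intro: norm_le_componentwise_cart)
qed simp_all

lemma omega_dist_coord_line_mix_le:
  assumes "c \<notin> A" and "\<bar>s\<bar> \<le> \<bar>coord c w - coord c z\<bar>"
  shows "omega_dist X (coord_line c (coord_mix A z w) s) z \<le> omega_dist X w z"
proof (rule omega_dist_mono)
  obtain k0 i0 b where c_eq: "c = (k0, i0, b)"
    by (cases c)
  fix k i
  show "\<bar>(fst (coord_line c (coord_mix A z w) s) k - fst z k) $ i\<bar> \<le> \<bar>(fst w k - fst z k) $ i\<bar>"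
    and "\<bar>(snd (coord_line c (coord_mix A z w) s) k - snd z k) $ i\<bar> \<le> \<bar>(snd w k - snd z k) $ i\<bar>"
    using assms unfolding c_eq
    by (cases b; auto simp: coord_line_def coord_mix_def coord_def axis_def)+
qed

lemma C1_Omega_mean_value:
  fixes h :: "'d::finite phase \<Rightarrow> real"
  assumes X: "finite X" and h: "C1_Omega X h" and z: "z \<in> Omega X" and w: "w \<in> Omega X"
  shows "\<exists>\<xi>. h w - h z = (\<Sum>c\<in>X \<times> UNIV \<times> UNIV. coord_partial h c (\<xi> c) * (coord c w - coord c z)) \<and>
      (\<forall>c\<in>X \<times> UNIV \<times> UNIV. \<xi> c \<in> Omega X \<and> omega_dist X (\<xi> c) z \<le> omega_dist X w z)"
proof -
  let ?C = "X \<times> (UNIV :: 'd set) \<times> (UNIV :: bool set)"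
  have "\<exists>\<xi>. h (coord_mix ?C z w) - h (coord_mix {} z w)
      = (\<Sum>c\<in>?C. coord_partial h c (\<xi> c) * (coord c w - coord c z)) \<and>
      (\<forall>c\<in>?C. \<exists>A s. A \<subseteq> ?C \<and> c \<notin> A \<and> \<bar>s\<bar> \<le> \<bar>coord c w - coord c z\<bar> \<and>
        \<xi> c = coord_line c (coord_mix A z w) s)"
  proof (rule telescoping_mvt[where h = h and P = "\<lambda>A. coord_mix A z w" and line = coord_line
        and \<delta> = "\<lambda>c. coord c w - coord c z" and D = "coord_partial h"])
    show "finite ?C"
      using X by simp
    show "coord_mix (insert c A) z w = coord_line c (coord_mix A z w) (coord c w - coord c z)"
      if "c \<notin> A" for c A
      using that by (rule coord_mix_insert)
    show "((\<lambda>s. h (coord_line c (coord_mix A z w) s)) has_real_derivative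
        coord_partial h c (coord_line c (coord_mix A z w) s)) (at s)" if "c \<in> ?C" for c A s
      using that by (rule C1_Omega_coord_line_deriv[OF h coord_mix_in_Omega[OF z w]])
  qed simp
  then obtain \<xi> where eq: "h (coord_mix ?C z w) - h (coord_mix {} z w)
      = (\<Sum>c\<in>?C. coord_partial h c (\<xi> c) * (coord c w - coord c z))"
    and \<xi>: "\<forall>c\<in>?C. \<exists>A s. A \<subseteq> ?C \<and> c \<notin> A \<and> \<bar>s\<bar> \<le> \<bar>coord c w - coord c z\<bar> \<and>
      \<xi> c = coord_line c (coord_mix A z w) s"
    by blast
  have "\<xi> c \<in> Omega X \<and> omega_dist X (\<xi> c) z \<le> omega_dist X w z" if c: "c \<in> ?C" for c
  proof -
    obtain A s where "c \<notin> A" "\<bar>s\<bar> \<le> \<bar>coord c w - coord c z\<bar>" and \<xi>_c: "\<xi> c = coord_line c (coord_mix A z w) s"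
      using \<xi> c by blast
    then have "omega_dist X (\<xi> c) z \<le> omega_dist X w z"
      unfolding \<xi>_c by (intro omega_dist_coord_line_mix_le)
    moreover have "\<xi> c \<in> Omega X"
      unfolding \<xi>_c by (rule coord_line_in_Omega[OF coord_mix_in_Omega[OF z w] c])
    ultimately show ?thesis
      by simp
  qed
  moreover have "h w - h z = (\<Sum>c\<in>?C. coord_partial h c (\<xi> c) * (coord c w - coord c z))"
    using eq by (simp only: coord_mix_all[OF z w] coord_mix_empty)
  ultimately show ?thesis
    by blast
qed

lemma continuous_Omega_coord_partial:
  assumes "C1_Omega X h" and "c \<in> X \<times> UNIV \<times> UNIV"
  shows "continuous_Omega X (coord_partial h c)"
proof -
  obtain k i b where "c = (k, i, b)"
    by (cases c)
  with assms show ?thesis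
    unfolding C1_Omega_def coord_partial_def by (cases b) auto
qed

lemma omega_dist_nonneg: "0 \<le> omega_dist X z w"
  unfolding omega_dist_def by (intro real_sqrt_ge_zero sum_nonneg add_nonneg_nonneg) auto

lemma omega_dist_tendsto_0:
  assumes "\<And>k. k \<in> X \<Longrightarrow> ((\<lambda>s. fst (\<gamma> s) k) \<longlongrightarrow> fst p k) F"
    and "\<And>k. k \<in> X \<Longrightarrow> ((\<lambda>s. snd (\<gamma> s) k) \<longlongrightarrow> snd p k) F"
  shows "((\<lambda>s. omega_dist X (\<gamma> s) p) \<longlongrightarrow> 0) F"
proof -
  have "((\<lambda>s. omega_dist X (\<gamma> s) p) \<longlongrightarrow> omega_dist X p p) F"
    unfolding omega_dist_def using assms by (intro tendsto_intros) auto
  then show ?thesis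
    by (simp add: omega_dist_def)
qed

lemma continuous_Omega_tendsto:
  assumes g: "continuous_Omega X g" and p: "p \<in> Omega X" and \<xi>: "\<And>s. \<xi> s \<in> Omega X"
    and lim: "((\<lambda>s. omega_dist X (\<xi> s) p) \<longlongrightarrow> 0) F"
  shows "((\<lambda>s. g (\<xi> s)) \<longlongrightarrow> g p) F"
proof (rule tendstoI)
  fix e :: real
  assume "0 < e"
  then obtain d where "0 < d"
    and d: "\<And>w. w \<in> Omega X \<Longrightarrow> omega_dist X w p < d \<Longrightarrow> \<bar>g w - g p\<bar> < e"
    using g p unfolding continuous_Omega_def by blast
  from tendstoD[OF lim \<open>0 < d\<close>] show "eventually (\<lambda>s. dist (g (\<xi> s)) (g p) < e) F"
  proof eventually_elim
    case (elim s)
    then have "omega_dist X (\<xi> s) p < d"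
      by (simp add: dist_real_def abs_less_iff)
    then show ?case
      using d[OF \<xi>] by (simp add: dist_real_def)
  qed
qed

lemma has_real_derivative_C1_Omega_comp:
  fixes h :: "'d::finite phase \<Rightarrow> real" and \<gamma> :: "real \<Rightarrow> 'd phase"
  assumes X: "finite X" and h: "C1_Omega X h" and \<gamma>: "\<And>s. \<gamma> s \<in> Omega X"
    and dp: "\<And>x i. x \<in> X \<Longrightarrow> ((\<lambda>s. fst (\<gamma> s) x $ i) has_real_derivative a x i) (at 0)"
    and dq: "\<And>x i. x \<in> X \<Longrightarrow> ((\<lambda>s. snd (\<gamma> s) x $ i) has_real_derivative b x i) (at 0)"
  shows "((\<lambda>s. h (\<gamma> s)) has_real_derivative
     (\<Sum>x\<in>X. \<Sum>i\<in>UNIV. dp h x i (\<gamma> 0) * a x i + dq h x i (\<gamma> 0) * b x i)) (at 0)"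
proof -
  let ?C = "X \<times> (UNIV :: 'd set) \<times> (UNIV :: bool set)"
  define der where "der c = (case c of (k, i, b') \<Rightarrow> if b' then a k i else b k i)" for c
  have "\<forall>s. \<exists>\<xi>. h (\<gamma> s) - h (\<gamma> 0)
      = (\<Sum>c\<in>?C. coord_partial h c (\<xi> c) * (coord c (\<gamma> s) - coord c (\<gamma> 0))) \<and>
      (\<forall>c\<in>?C. \<xi> c \<in> Omega X \<and> omega_dist X (\<xi> c) (\<gamma> 0) \<le> omega_dist X (\<gamma> s) (\<gamma> 0))"
    using C1_Omega_mean_value[OF X h \<gamma> \<gamma>] by blast
  from choice[OF this] obtain \<Xi> where \<Xi>: "\<And>s. h (\<gamma> s) - h (\<gamma> 0)
      = (\<Sum>c\<in>?C. coord_partial h c (\<Xi> s c) * (coord c (\<gamma> s) - coord c (\<gamma> 0)))"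
    and \<Xi>_close: "\<And>s c. c \<in> ?C \<Longrightarrow> \<Xi> s c \<in> Omega X \<and> omega_dist X (\<Xi> s c) (\<gamma> 0) \<le> omega_dist X (\<gamma> s) (\<gamma> 0)"
    by blast
  have dist_lim: "((\<lambda>s. omega_dist X (\<gamma> s) (\<gamma> 0)) \<longlongrightarrow> 0) (at 0)"
    using DERIV_isCont[OF dp] DERIV_isCont[OF dq]
    by (intro omega_dist_tendsto_0) (auto simp: isCont_def intro!: vec_tendstoI)
  have dist_\<Xi>: "((\<lambda>s. omega_dist X (\<Xi> s c) (\<gamma> 0)) \<longlongrightarrow> 0) (at 0)" if "c \<in> ?C" for c
  proof (rule Lim_null_comparison[OF _ dist_lim], intro always_eventually allI)
    show "norm (omega_dist X (\<Xi> s c) (\<gamma> 0)) \<le> omega_dist X (\<gamma> s) (\<gamma> 0)" for s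
      using \<Xi>_close[OF that, of s] omega_dist_nonneg[of X "\<Xi> s c" "\<gamma> 0"] by simp
  qed
  have partial_lim: "((\<lambda>s. coord_partial h c (\<Xi> s c)) \<longlongrightarrow> coord_partial h c (\<gamma> 0)) (at 0)"
    if "c \<in> ?C" for c
    using \<Xi>_close[OF that] \<gamma>[of 0] dist_\<Xi>[OF that]
    by (intro continuous_Omega_tendsto[OF continuous_Omega_coord_partial[OF h that]]) auto
  have quotient_lim: "((\<lambda>s. (coord c (\<gamma> s) - coord c (\<gamma> 0)) / s) \<longlongrightarrow> der c) (at 0)" if "c \<in> ?C" for c
    using that dp dq by (auto simp: coord_def der_def DERIV_def split: prod.split)
  have "((\<lambda>s. (h (\<gamma> (0 + s)) - h (\<gamma> 0)) / s) \<longlongrightarrow> (\<Sum>c\<in>?C. coord_partial h c (\<gamma> 0) * der c)) (at 0)"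
    unfolding \<Xi> using partial_lim quotient_lim
    by (simp add: sum_divide_distrib times_divide_eq_right[symmetric] del: times_divide_eq_right)
      (intro tendsto_sum tendsto_mult)
  moreover have "(\<Sum>c\<in>?C. coord_partial h c (\<gamma> 0) * der c)
      = (\<Sum>x\<in>X. \<Sum>i\<in>UNIV. dp h x i (\<gamma> 0) * a x i + dq h x i (\<gamma> 0) * b x i)"
    unfolding sum_coords[OF X] by (simp add: coord_partial_def der_def)
  ultimately show ?thesis
    by (simp add: DERIV_def)
qed

section \<open>Observables localized in a region\<close>

lemma proj_in_Omega: "proj X w \<in> Omega X"
  by (simp add: proj_def Omega_def)

lemma proj_id: "w \<in> Omega X \<Longrightarrow> proj X w = w"
  by (auto simp: proj_def Omega_def prod_eq_iff fun_eq_iff)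

lemma Omega_mono: "X \<subseteq> L \<Longrightarrow> Omega X \<subseteq> Omega L"
  by (auto simp: Omega_def)

lemma zero_in_Omega: "((\<lambda>k. 0), (\<lambda>k. 0)) \<in> Omega L"
  by (simp add: Omega_def)

lemma dq_proj: "dq (\<lambda>w. f (proj X w)) j i w = (if j \<in> X then dq f j i (proj X w) else 0)"
proof -
  have "proj X (fst w, (snd w)(j := snd w j + s *\<^sub>R axis i 1))
      = (if j \<in> X then (fst (proj X w), (snd (proj X w))(j := snd (proj X w) j + s *\<^sub>R axis i 1))
         else proj X w)" for s
    by (auto simp: proj_def fun_eq_iff)
  then show ?thesis
    by (simp add: dq_def DERIV_imp_deriv)
qed

lemma dp_proj: "dp (\<lambda>w. f (proj X w)) j i w = (if j \<in> X then dp f j i (proj X w) else 0)"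
proof -
  have "proj X ((fst w)(j := fst w j + s *\<^sub>R axis i 1), snd w)
      = (if j \<in> X then ((fst (proj X w))(j := fst (proj X w) j + s *\<^sub>R axis i 1), snd (proj X w))
         else proj X w)" for s
    by (auto simp: proj_def fun_eq_iff)
  then show ?thesis
    by (simp add: dp_def DERIV_imp_deriv)
qed

lemma grad_norm_proj:
  assumes "finite L" and "X \<subseteq> L"
  shows "grad_norm L (\<lambda>w. f (proj X w)) w = grad_norm X f (proj X w)"
proof -
  have "(\<Sum>j\<in>L. \<Sum>i\<in>UNIV. (dq (\<lambda>w. f (proj X w)) j i w)\<^sup>2 + (dp (\<lambda>w. f (proj X w)) j i w)\<^sup>2)
      = (\<Sum>j\<in>X. \<Sum>i\<in>UNIV. (dq f j i (proj X w))\<^sup>2 + (dp f j i (proj X w))\<^sup>2)"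
    unfolding dq_proj dp_proj by (rule sum.mono_neutral_cong_right) (use assms in auto)
  then show ?thesis
    by (simp add: grad_norm_def)
qed

lemma partial_le_grad_norm:
  assumes "finite L" and "j \<in> L"
  shows "\<bar>dq h j i z\<bar> \<le> grad_norm L h z" and "\<bar>dp h j i z\<bar> \<le> grad_norm L h z"
proof -
  define T where "T = (\<Sum>j\<in>L. \<Sum>i\<in>UNIV. (dq h j i z)\<^sup>2 + (dp h j i z)\<^sup>2)"
  have "0 \<le> T"
    unfolding T_def by (intro sum_nonneg add_nonneg_nonneg) auto
  have "(dq h j i z)\<^sup>2 + (dp h j i z)\<^sup>2 \<le> (\<Sum>i\<in>UNIV. (dq h j i z)\<^sup>2 + (dp h j i z)\<^sup>2)"
    by (rule member_le_sum) auto
  also have "\<dots> \<le> T"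
    unfolding T_def using assms by (intro member_le_sum sum_nonneg) auto
  finally have sq: "(dq h j i z)\<^sup>2 + (dp h j i z)\<^sup>2 \<le> T" .
  have "(grad_norm L h z)\<^sup>2 = T"
    using \<open>0 \<le> T\<close> by (simp add: grad_norm_def T_def[symmetric])
  then have "(\<bar>dq h j i z\<bar>)\<^sup>2 \<le> (grad_norm L h z)\<^sup>2" "(\<bar>dp h j i z\<bar>)\<^sup>2 \<le> (grad_norm L h z)\<^sup>2"
    using sq zero_le_power2[of "dq h j i z"] zero_le_power2[of "dp h j i z"] unfolding power2_abs by linarith+
  moreover have "0 \<le> grad_norm L h z"
    using \<open>0 \<le> T\<close> by (simp add: grad_norm_def T_def[symmetric])
  ultimately show "\<bar>dq h j i z\<bar> \<le> grad_norm L h z" "\<bar>dp h j i z\<bar> \<le> grad_norm L h z"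
    by (auto intro: power2_le_imp_le)
qed

lemma C1_norm_bounds:
  fixes f :: "'d::finite phase \<Rightarrow> real"
  assumes L: "finite L" and XL: "X \<subseteq> L" and f: "C1b_Omega X f"
  shows "\<And>j i w. j \<in> L \<Longrightarrow> \<bar>dq (\<lambda>w. f (proj X w)) j i w\<bar> \<le> C1_norm L (\<lambda>w. f (proj X w))"
    and "\<And>j i w. j \<in> L \<Longrightarrow> \<bar>dp (\<lambda>w. f (proj X w)) j i w\<bar> \<le> C1_norm L (\<lambda>w. f (proj X w))"
    and "0 \<le> C1_norm L (\<lambda>w. f (proj X w))"
proof -
  let ?f = "\<lambda>w. f (proj X w)"
  have bdd_f: "bdd_above ((\<lambda>z. \<bar>?f z\<bar>) ` Omega L)"
    using f proj_in_Omega unfolding C1b_Omega_def bdd_above_def by blast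
  have bdd_grad: "bdd_above (grad_norm L ?f ` Omega L)"
    using f proj_in_Omega unfolding C1b_Omega_def grad_norm_proj[OF L XL] bdd_above_def by blast
  have sup_f: "0 \<le> (SUP z\<in>Omega L. \<bar>?f z\<bar>)"
    using cSUP_upper[OF zero_in_Omega bdd_f] by (smt (verit) abs_ge_zero)
  have grad_le: "grad_norm L ?f w \<le> (SUP z\<in>Omega L. grad_norm L ?f z)" for w
  proof -
    have "grad_norm L ?f w = grad_norm L ?f (proj X w)"
      unfolding grad_norm_proj[OF L XL] by (simp add: proj_id proj_in_Omega)
    also have "\<dots> \<le> (SUP z\<in>Omega L. grad_norm L ?f z)"
      using proj_in_Omega Omega_mono[OF XL] by (intro cSUP_upper[OF _ bdd_grad]) blast
    finally show ?thesis .
  qed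
  have "0 \<le> grad_norm L ?f w" for w
    unfolding grad_norm_def by (intro real_sqrt_ge_zero sum_nonneg add_nonneg_nonneg) auto
  then show "0 \<le> C1_norm L ?f"
    unfolding C1_norm_def using sup_f grad_le[of undefined] by (smt (verit))
  fix j i w assume "j \<in> L"
  then show "\<bar>dq ?f j i w\<bar> \<le> C1_norm L ?f" and "\<bar>dp ?f j i w\<bar> \<le> C1_norm L ?f"
    using partial_le_grad_norm[OF L, of j ?f i w] grad_le[of w] sup_f unfolding C1_norm_def by linarith+
qed

section \<open>Derivatives of observables transported by the flow\<close>

context lattice_system
begin

lemma flow_coord_line_derivative:
  assumes z: "z \<in> Omega L" and j: "j \<in> L"
  obtains v where
    "\<And>x i'. x \<in> L \<Longrightarrow> ((\<lambda>s. fst (\<Phi> t (coord_line (j, i, b) z s)) x $ i') has_real_derivative fst (v x) $ i') (at 0)"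
    "\<And>x i'. x \<in> L \<Longrightarrow> ((\<lambda>s. snd (\<Phi> t (coord_line (j, i, b) z s)) x $ i') has_real_derivative snd (v x) $ i') (at 0)"
    "\<And>x. x \<in> L \<Longrightarrow> norm (v x) \<le> lr_weight \<kappa> CF w j x \<bar>t\<bar>"
proof -
  define E where "E l = (if l = j then (if b then (axis i (1::real), 0) else (0, axis i (1::real))) else 0)" for l
  interpret perturbation: flow_perturbation L m \<nu> V Cf CV \<Phi> w \<kappa> S CF z j "coord_line (j, i, b) z" E
  proof
    show "coord_line (j, i, b) z s \<in> Omega L" for s
      using j by (intro coord_line_in_Omega z) auto
    show "site (coord_line (j, i, b) z s) l - site z l = s *\<^sub>R E l" for s l
      by (cases b) (auto simp: coord_line_def site_def E_def zero_prod_def)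
    show "norm (E l) \<le> (if l = j then 1 else 0)" for l
      by (cases b) (auto simp: E_def norm_axis_1 norm_Pair)
  qed (use z j in auto)
  obtain v where v: "\<And>k. k \<in> L \<Longrightarrow> ((\<lambda>s. (1 / s) *\<^sub>R perturbation.increment s k t) \<longlongrightarrow> v k) (at 0)"
    and v_le: "\<And>k. k \<in> L \<Longrightarrow> norm (v k) \<le> lr_weight \<kappa> CF w j k \<bar>t\<bar>"
    using perturbation.increment_quotient_tendsto[where t = t] by blast
  show thesis
  proof (rule that[OF _ _ v_le])
    fix x i' assume "x \<in> L"
    have "((\<lambda>s. fst ((1 / s) *\<^sub>R perturbation.increment s x t) $ i') \<longlongrightarrow> fst (v x) $ i') (at 0)"
      and "((\<lambda>s. snd ((1 / s) *\<^sub>R perturbation.increment s x t) $ i') \<longlongrightarrow> snd (v x) $ i') (at 0)"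
      by (intro tendsto_vec_nth tendsto_fst tendsto_snd v[OF \<open>x \<in> L\<close>])+
    then show "((\<lambda>s. fst (\<Phi> t (coord_line (j, i, b) z s)) x $ i') has_real_derivative fst (v x) $ i') (at 0)"
      and "((\<lambda>s. snd (\<Phi> t (coord_line (j, i, b) z s)) x $ i') has_real_derivative snd (v x) $ i') (at 0)"
      unfolding DERIV_def
      by (simp_all add: perturbation.increment_def site_def divide_inverse mult.commute)
  qed
qed

lemma flow_comp_coord_line_deriv:
  fixes f :: "'d phase \<Rightarrow> real"
  assumes XL: "X \<subseteq> L" and f: "C1_Omega X f"
    and Gf: "\<And>x i w. x \<in> X \<Longrightarrow> w \<in> Omega X \<Longrightarrow> \<bar>dp f x i w\<bar> \<le> Gf \<and> \<bar>dq f x i w\<bar> \<le> Gf"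
    and "0 \<le> Gf" and z: "z \<in> Omega L" and j: "j \<in> L"
  obtains D where "((\<lambda>s. f (proj X (\<Phi> t (coord_line (j, i, b) z s)))) has_real_derivative D) (at 0)"
    and "\<bar>D\<bar> \<le> 2 * real CARD('d) * Gf * (\<Sum>x\<in>X. lr_weight \<kappa> CF w j x \<bar>t\<bar>)"
proof -
  have X: "finite X"
    using finite_L XL finite_subset by blast
  obtain v where
    dp: "\<And>x i'. x \<in> L \<Longrightarrow> ((\<lambda>s. fst (\<Phi> t (coord_line (j, i, b) z s)) x $ i') has_real_derivative fst (v x) $ i') (at 0)"
    and dq: "\<And>x i'. x \<in> L \<Longrightarrow> ((\<lambda>s. snd (\<Phi> t (coord_line (j, i, b) z s)) x $ i') has_real_derivative snd (v x) $ i') (at 0)"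
    and v_le: "\<And>x. x \<in> L \<Longrightarrow> norm (v x) \<le> lr_weight \<kappa> CF w j x \<bar>t\<bar>"
    using flow_coord_line_derivative[OF z j, where t = t and i = i and b = b] by blast
  define \<gamma> where "\<gamma> s = proj X (\<Phi> t (coord_line (j, i, b) z s))" for s
  have "((\<lambda>s. fst (\<gamma> s) x $ i') has_real_derivative fst (v x) $ i') (at 0)"
    and "((\<lambda>s. snd (\<gamma> s) x $ i') has_real_derivative snd (v x) $ i') (at 0)" if "x \<in> X" for x i'
    using dp[of x i'] dq[of x i'] that XL by (auto simp: \<gamma>_def proj_def)
  then have D: "((\<lambda>s. f (\<gamma> s)) has_real_derivative
      (\<Sum>x\<in>X. \<Sum>i'\<in>UNIV. dp f x i' (\<gamma> 0) * fst (v x) $ i' + dq f x i' (\<gamma> 0) * snd (v x) $ i')) (at 0)"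
    by (intro has_real_derivative_C1_Omega_comp[OF X f]) (auto simp: \<gamma>_def proj_in_Omega)
  have term_le: "\<bar>dp f x i' (\<gamma> 0) * fst (v x) $ i' + dq f x i' (\<gamma> 0) * snd (v x) $ i'\<bar> \<le> 2 * Gf * norm (v x)"
    if "x \<in> X" for x i'
  proof -
    have "\<bar>fst (v x) $ i'\<bar> \<le> norm (v x)"
      using component_le_norm_cart[of "fst (v x)" i'] norm_fst_le[where x = "fst (v x)" and y = "snd (v x)"]
      by simp
    moreover have "\<bar>snd (v x) $ i'\<bar> \<le> norm (v x)"
      using component_le_norm_cart[of "snd (v x)" i'] norm_snd_le[where x = "fst (v x)" and y = "snd (v x)"]
      by simp
    moreover have "\<bar>dp f x i' (\<gamma> 0)\<bar> \<le> Gf" and "\<bar>dq f x i' (\<gamma> 0)\<bar> \<le> Gf"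
      using Gf[OF that] by (auto simp: \<gamma>_def proj_in_Omega)
    ultimately have "\<bar>dp f x i' (\<gamma> 0)\<bar> * \<bar>fst (v x) $ i'\<bar> \<le> Gf * norm (v x)"
      and "\<bar>dq f x i' (\<gamma> 0)\<bar> * \<bar>snd (v x) $ i'\<bar> \<le> Gf * norm (v x)"
      using \<open>0 \<le> Gf\<close> by (auto intro: mult_mono)
    then show ?thesis
      using abs_triangle_ineq[of "dp f x i' (\<gamma> 0) * fst (v x) $ i'" "dq f x i' (\<gamma> 0) * snd (v x) $ i'"]
      unfolding abs_mult by linarith
  qed
  have "\<bar>\<Sum>x\<in>X. \<Sum>i'\<in>UNIV. dp f x i' (\<gamma> 0) * fst (v x) $ i' + dq f x i' (\<gamma> 0) * snd (v x) $ i'\<bar>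
      \<le> (\<Sum>x\<in>X. \<Sum>i'\<in>(UNIV::'d set). 2 * Gf * norm (v x))"
    by (rule order_trans[OF sum_abs sum_mono], rule order_trans[OF sum_abs sum_mono]) (rule term_le)
  also have "\<dots> = 2 * real CARD('d) * Gf * (\<Sum>x\<in>X. norm (v x))"
    by (simp add: sum_distrib_left algebra_simps)
  also have "\<dots> \<le> 2 * real CARD('d) * Gf * (\<Sum>x\<in>X. lr_weight \<kappa> CF w j x \<bar>t\<bar>)"
    using v_le XL \<open>0 \<le> Gf\<close> by (intro mult_left_mono sum_mono) auto
  finally show ?thesis
    using that D by (simp add: \<gamma>_def)
qed

end

context lattice_system
begin

lemma flow_comp_partials_le:
  fixes f :: "'d phase \<Rightarrow> real" and t :: real
  assumes XL: "X \<subseteq> L" and f: "C1b_Omega X f" and z: "z \<in> Omega L" and j: "j \<in> L"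
  defines "B \<equiv> 2 * real CARD('d) * C1_norm L (\<lambda>w. f (proj X w)) * (\<Sum>x\<in>X. lr_weight \<kappa> CF w j x \<bar>t\<bar>)"
  shows "\<bar>dq (\<lambda>w. f (proj X (\<Phi> t w))) j i z\<bar> \<le> B" and "\<bar>dp (\<lambda>w. f (proj X (\<Phi> t w))) j i z\<bar> \<le> B"
proof -
  let ?f = "\<lambda>w. f (proj X w)"
  have bound: "\<bar>dp f x i w\<bar> \<le> C1_norm L ?f \<and> \<bar>dq f x i w\<bar> \<le> C1_norm L ?f"
    if "x \<in> X" and "w \<in> Omega X" for x i w
  proof -
    have "\<bar>dq ?f x i w\<bar> \<le> C1_norm L ?f" "\<bar>dp ?f x i w\<bar> \<le> C1_norm L ?f"
      using C1_norm_bounds(1,2)[OF finite_L XL f, of x i w] XL that by auto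
    then show ?thesis
      using that by (simp add: dp_proj dq_proj proj_id)
  qed
  have "C1_Omega X f"
    using f by (simp add: C1b_Omega_def)
  note line_deriv = flow_comp_coord_line_deriv[OF XL this bound C1_norm_bounds(3)[OF finite_L XL f] z j]
  obtain Dq where "((\<lambda>s. f (proj X (\<Phi> t (coord_line (j, i, False) z s)))) has_real_derivative Dq) (at 0)"
    and "\<bar>Dq\<bar> \<le> B"
    using line_deriv[of t i False] unfolding B_def by blast
  then show "\<bar>dq (\<lambda>w. f (proj X (\<Phi> t w))) j i z\<bar> \<le> B"
    by (simp add: dq_def coord_line_def DERIV_imp_deriv)
  obtain Dp where "((\<lambda>s. f (proj X (\<Phi> t (coord_line (j, i, True) z s)))) has_real_derivative Dp) (at 0)"
    and "\<bar>Dp\<bar> \<le> B"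
    using line_deriv[of t i True] unfolding B_def by blast
  then show "\<bar>dp (\<lambda>w. f (proj X (\<Phi> t w))) j i z\<bar> \<le> B"
    by (simp add: dp_def coord_line_def DERIV_imp_deriv)
qed

lemma poisson_flow_bound:
  fixes f g :: "'d phase \<Rightarrow> real"
  assumes XL: "X \<subseteq> L" and YL: "Y \<subseteq> L" and disjoint: "X \<inter> Y = {}"
    and f: "C1b_Omega X f" and g: "C1b_Omega Y g" and z: "z \<in> Omega L"
  shows "\<bar>poisson L (\<lambda>w. f (proj X (\<Phi> t w))) (\<lambda>w. g (proj Y w)) z\<bar>
     \<le> 4 * real CARD('d)^2 * C1_norm L (\<lambda>w. f (proj X w)) * C1_norm L (\<lambda>w. g (proj Y w)) *
        ((exp (\<kappa> * CF * \<bar>t\<bar>) - 1) / CF) * (\<Sum>x\<in>X. \<Sum>y\<in>Y. w x y)"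
proof -
  let ?F = "\<lambda>w. f (proj X (\<Phi> t w))" and ?g = "\<lambda>w. g (proj Y w)"
  define A where "A = (exp (\<kappa> * CF * \<bar>t\<bar>) - 1) / CF"
  define Gf where "Gf = C1_norm L (\<lambda>w. f (proj X w))"
  define Gg where "Gg = C1_norm L ?g"
  define B where "B j = 2 * real CARD('d) * Gf * (A * (\<Sum>x\<in>X. w x j))" for j
  have "0 \<le> Gf" "0 \<le> Gg"
    unfolding Gf_def Gg_def by (rule C1_norm_bounds(3)[OF finite_L XL f], rule C1_norm_bounds(3)[OF finite_L YL g])
  have term_le: "\<bar>dq ?F j i z * dp ?g j i z - dp ?F j i z * dq ?g j i z\<bar> \<le> (if j \<in> Y then 2 * B j * Gg else 0)"
    if j: "j \<in> L" for j i
  proof (cases "j \<in> Y")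
    case True
    have "(\<Sum>x\<in>X. lr_weight \<kappa> CF w j x \<bar>t\<bar>) = A * (\<Sum>x\<in>X. w x j)"
      using disjoint True by (auto simp: lr_weight_def A_def sum_distrib_left intro!: sum.cong)
    then have F_le: "\<bar>dq ?F j i z\<bar> \<le> B j" "\<bar>dp ?F j i z\<bar> \<le> B j"
      using flow_comp_partials_le[OF XL f z j, of t i] by (simp_all add: B_def Gf_def)
    have g_le: "\<bar>dq ?g j i z\<bar> \<le> Gg" "\<bar>dp ?g j i z\<bar> \<le> Gg"
      using C1_norm_bounds(1,2)[OF finite_L YL g j] unfolding Gg_def by auto
    have "\<bar>dq ?F j i z * dp ?g j i z - dp ?F j i z * dq ?g j i z\<bar>
        \<le> \<bar>dq ?F j i z\<bar> * \<bar>dp ?g j i z\<bar> + \<bar>dp ?F j i z\<bar> * \<bar>dq ?g j i z\<bar>"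
      by (simp add: abs_mult[symmetric] abs_triangle_ineq4)
    also have "\<dots> \<le> B j * Gg + B j * Gg"
      using F_le g_le by (intro add_mono mult_mono) (auto intro: order_trans[OF abs_ge_zero])
    finally show ?thesis
      using True by (simp add: algebra_simps)
  qed (simp add: dp_proj dq_proj)
  have "\<bar>poisson L ?F ?g z\<bar> \<le> (\<Sum>j\<in>L. \<Sum>i\<in>(UNIV::'d set). if j \<in> Y then 2 * B j * Gg else 0)"
    unfolding poisson_def
    by (intro order_trans[OF sum_abs sum_mono] order_trans[OF sum_abs sum_mono] term_le)
  also have "\<dots> = (\<Sum>j\<in>L. if j \<in> Y then real CARD('d) * (2 * B j * Gg) else 0)"
    by (rule sum.cong[OF refl]) simp
  also have "\<dots> = (\<Sum>j\<in>Y. real CARD('d) * (2 * B j * Gg))"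
    using finite_L YL by (simp add: sum.If_cases Int_absorb1)
  also have "\<dots> = 4 * real CARD('d)^2 * Gf * Gg * A * (\<Sum>y\<in>Y. \<Sum>x\<in>X. w x y)"
    by (simp add: B_def sum_distrib_left power2_eq_square algebra_simps)
  finally show ?thesis
    unfolding Gf_def Gg_def A_def by (simp add: sum.swap[of _ Y])
qed

end

lemma sinh_le_exp_minus_1:
  fixes x :: real
  assumes "0 \<le> x"
  shows "sinh x \<le> exp x - 1"
  using sinh_plus_cosh[of x] cosh_real_ge_1[of x] by linarith

lemma exp_minus_1_le_sinh_scaled:
  fixes u a b R :: real
  assumes "0 \<le> u" "0 \<le> a" "0 \<le> b" "a \<le> R" "2 * b \<le> R"
  shows "b * (exp (a * u) - 1) \<le> R * sinh (R * u)"
proof -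
  have "exp (a * u) - 1 \<le> 2 * sinh (a * u)"
    using assms by (simp add: sinh_def)
  then have "b * (exp (a * u) - 1) \<le> b * (2 * sinh (a * u))"
    using \<open>0 \<le> b\<close> by (rule mult_left_mono)
  also have "\<dots> = (2 * b) * sinh (a * u)"
    by simp
  also have "\<dots> \<le> R * sinh (a * u)"
    using assms by (intro mult_right_mono) auto
  also have "\<dots> \<le> R * sinh (R * u)"
    using assms by (intro mult_left_mono) (auto intro: mult_right_mono)
  finally show ?thesis .
qed

definition lr_rate :: "real \<Rightarrow> real \<Rightarrow> real \<Rightarrow> real \<Rightarrow> real \<Rightarrow> real \<Rightarrow> real" where
  "lr_rate n CV \<Psi> S M N = 2 * (\<bar>N\<bar> + \<bar>M\<bar> + n\<^sup>2 * \<bar>\<Psi>\<bar> * CV\<^sup>2 * (\<bar>S\<bar> + 1))"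

definition lr_constant :: "real \<Rightarrow> real \<Rightarrow> real \<Rightarrow> real \<Rightarrow> real \<Rightarrow> real \<Rightarrow> real \<Rightarrow> real" where
  "lr_constant n CV \<Psi> S CF M N = (1 + \<bar>lr_rate n CV \<Psi> S M N * CF\<bar> + 2 * n\<^sup>2 / \<bar>CF\<bar>)\<^sup>2"

lemma sqrt_lr_constant: "sqrt (lr_constant n CV \<Psi> S CF M N) = 1 + \<bar>lr_rate n CV \<Psi> S M N * CF\<bar> + 2 * n\<^sup>2 / \<bar>CF\<bar>"
proof -
  have "0 \<le> 2 * n\<^sup>2 / \<bar>CF\<bar>"
    by simp
  then show ?thesis
    by (simp add: lr_constant_def)
qed

lemma lr_constant_pos: "0 < lr_constant n CV \<Psi> S CF M N"
proof -
  have "0 \<le> 2 * n\<^sup>2 / \<bar>CF\<bar>"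
    by simp
  then have "0 < 1 + \<bar>lr_rate n CV \<Psi> S M N * CF\<bar> + 2 * n\<^sup>2 / \<bar>CF\<bar>"
    using abs_ge_zero[of "lr_rate n CV \<Psi> S M N * CF"] by linarith
  then show ?thesis
    unfolding lr_constant_def by simp
qed

locale anharmonic_lattice =
  fixes \<Gamma> :: "nat set" and \<rho> :: "nat \<Rightarrow> nat \<Rightarrow> real" and F :: "real \<Rightarrow> real" and CF :: real
    and m \<nu> :: "nat \<Rightarrow> real" and V :: "nat \<Rightarrow> nat \<Rightarrow> real^'d::finite \<Rightarrow> real"
    and CV :: real and C :: "nat \<Rightarrow> nat \<Rightarrow> real"
  assumes metric: "\<forall>x\<in>\<Gamma>. \<forall>y\<in>\<Gamma>. 0 \<le> \<rho> x y \<and> (\<rho> x y = 0 \<longleftrightarrow> x = y) \<and> \<rho> x y = \<rho> y x"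
    and F_pos: "\<forall>r\<ge>0. F r > 0" and F_0: "F 0 = 1"
    and F_summable: "\<forall>y\<in>\<Gamma>. (\<lambda>x. F (\<rho> x y)) summable_on \<Gamma>"
    and F_sum_bdd: "bdd_above ((\<lambda>y. \<Sum>\<^sub>\<infinity>x\<in>\<Gamma>. F (\<rho> x y)) ` \<Gamma>)"
    and CF_pos: "CF > 0"
    and F_conv: "\<forall>x\<in>\<Gamma>. \<forall>y\<in>\<Gamma>. (\<lambda>z. F (\<rho> x z) * F (\<rho> z y)) summable_on \<Gamma>
      \<and> (\<Sum>\<^sub>\<infinity>z\<in>\<Gamma>. F (\<rho> x z) * F (\<rho> z y)) \<le> CF * F (\<rho> x y)"
    and m_\<nu>_pos: "\<forall>k\<in>\<Gamma>. m k > 0 \<and> \<nu> k > 0"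
    and inv_mass_bdd: "bdd_above ((\<lambda>k. 1 / m k) ` \<Gamma>)"
    and \<nu>_bdd: "bdd_above (\<nu> ` \<Gamma>)"
    and potentials: "\<forall>k\<in>\<Gamma>. \<forall>l\<in>\<Gamma>. smooth_fun (V k l) \<and> (\<forall>x. V k l x = V l k (- x)) \<and> C k l > 0
      \<and> (\<forall>\<beta> x. \<bar>partial_iter \<beta> (V k l) x\<bar> \<le> C k l * CV ^ length \<beta>)"
    and \<Psi>_bdd: "bdd_above ((\<lambda>(k, l). C k l / F (\<rho> k l)) ` (\<Gamma> \<times> \<Gamma>))"
begin

abbreviation "\<Psi>_norm \<equiv> SUP (k, l)\<in>\<Gamma> \<times> \<Gamma>. C k l / F (\<rho> k l)"
abbreviation "F_norm \<equiv> SUP y\<in>\<Gamma>. \<Sum>\<^sub>\<infinity>x\<in>\<Gamma>. F (\<rho> x y)"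
abbreviation "inv_mass_sup \<equiv> SUP k\<in>\<Gamma>. 1 / m k"
abbreviation "\<nu>_sup \<equiv> SUP k\<in>\<Gamma>. \<nu> k"

lemma F_rho_pos: "x \<in> \<Gamma> \<Longrightarrow> y \<in> \<Gamma> \<Longrightarrow> 0 < F (\<rho> x y)"
  using metric F_pos by blast

lemma F_rho_nonneg: "x \<in> \<Gamma> \<Longrightarrow> y \<in> \<Gamma> \<Longrightarrow> 0 \<le> F (\<rho> x y)"
  by (rule less_imp_le[OF F_rho_pos])

lemma F_rho_self: "k \<in> \<Gamma> \<Longrightarrow> F (\<rho> k k) = 1"
  using metric F_0 by (metis order_refl)

lemma F_sum_le: "finite L \<Longrightarrow> L \<subseteq> \<Gamma> \<Longrightarrow> k \<in> \<Gamma> \<Longrightarrow> (\<Sum>l\<in>L. F (\<rho> k l)) \<le> \<bar>F_norm\<bar>"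
proof -
  assume L: "finite L" "L \<subseteq> \<Gamma>" and k: "k \<in> \<Gamma>"
  have "\<rho> k l = \<rho> l k" if "l \<in> L" for l
    using L k metric that by blast
  then have "(\<Sum>l\<in>L. F (\<rho> k l)) = (\<Sum>l\<in>L. F (\<rho> l k))"
    by (intro sum.cong) simp_all
  also have "\<dots> \<le> (\<Sum>\<^sub>\<infinity>x\<in>\<Gamma>. F (\<rho> x k))"
    using F_summable k L by (intro finite_sum_le_infsum F_rho_nonneg) auto
  also have "\<dots> \<le> F_norm"
    using k F_sum_bdd by (rule cSUP_upper)
  finally show ?thesis
    by simp
qed

lemma coupling_le_F:
  assumes "k \<in> \<Gamma>" "l \<in> \<Gamma>"
  shows "real CARD('d)^2 * (C k l * CV^2) \<le> real CARD('d)^2 * \<bar>\<Psi>_norm\<bar> * CV^2 * F (\<rho> k l)"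
proof -
  have "C k l / F (\<rho> k l) \<le> \<Psi>_norm"
    using cSUP_upper[OF _ \<Psi>_bdd, of "(k, l)"] assms by simp
  then have "C k l \<le> \<Psi>_norm * F (\<rho> k l)"
    using F_rho_pos[OF assms] by (simp add: pos_divide_le_eq)
  also have "\<dots> \<le> \<bar>\<Psi>_norm\<bar> * F (\<rho> k l)"
    using F_rho_pos[OF assms] by (intro mult_right_mono) auto
  finally have "C k l * (real CARD('d)^2 * CV^2) \<le> \<bar>\<Psi>_norm\<bar> * F (\<rho> k l) * (real CARD('d)^2 * CV^2)"
    by (rule mult_right_mono) simp
  then show ?thesis
    by (simp add: algebra_simps)
qed

lemma sublattice_system:
  assumes L: "finite L" "L \<subseteq> \<Gamma>" and "is_ham_flow L (hamiltonian L m \<nu> V) \<Phi>"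
  shows "lattice_system L m \<nu> V C CV \<Phi> (\<lambda>k l. F (\<rho> k l))
    (lr_rate (real CARD('d)) CV \<Psi>_norm F_norm inv_mass_sup \<nu>_sup) \<bar>F_norm\<bar> CF"
proof -
  define P where "P = real CARD('d)^2 * \<bar>\<Psi>_norm\<bar> * CV^2"
  have "0 \<le> P"
    by (simp add: P_def)
  have half_rate: "lr_rate (real CARD('d)) CV \<Psi>_norm F_norm inv_mass_sup \<nu>_sup / 2
      = \<bar>\<nu>_sup\<bar> + \<bar>inv_mass_sup\<bar> + P * (\<bar>F_norm\<bar> + 1)"
    by (simp add: lr_rate_def P_def)
  have "P \<le> P * (\<bar>F_norm\<bar> + 1)"
    using \<open>0 \<le> P\<close> by (simp add: algebra_simps)
  then have P_le: "P \<le> lr_rate (real CARD('d)) CV \<Psi>_norm F_norm inv_mass_sup \<nu>_sup / 2"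
    unfolding half_rate by linarith
  show ?thesis
  proof
    fix k l assume "k \<in> L" "l \<in> L"
    then have k: "k \<in> \<Gamma>" and l: "l \<in> \<Gamma>"
      using L by auto
    then show "smooth_fun (V k l)" "\<And>x. V k l x = V l k (- x)"
      "\<And>\<beta> x. \<bar>partial_iter \<beta> (V k l) x\<bar> \<le> C k l * CV ^ length \<beta>"
      using potentials by blast+
    show "0 \<le> F (\<rho> k l)"
      by (rule F_rho_nonneg[OF k l])
    have "(\<Sum>j\<in>L. F (\<rho> k j) * F (\<rho> j l)) \<le> (\<Sum>\<^sub>\<infinity>j\<in>\<Gamma>. F (\<rho> k j) * F (\<rho> j l))"
      using F_conv k l L by (intro finite_sum_le_infsum mult_nonneg_nonneg F_rho_nonneg) auto
    also have "\<dots> \<le> CF * F (\<rho> k l)"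
      using F_conv k l by blast
    finally show "(\<Sum>j\<in>L. F (\<rho> k j) * F (\<rho> j l)) \<le> CF * F (\<rho> k l)" .
    have "real CARD('d)^2 * (C k l * CV^2) \<le> P * F (\<rho> k l)"
      using coupling_le_F[OF k l] by (simp add: P_def)
    also have "\<dots> \<le> lr_rate (real CARD('d)) CV \<Psi>_norm F_norm inv_mass_sup \<nu>_sup / 2 * F (\<rho> k l)"
      using P_le F_rho_pos[OF k l] by (intro mult_right_mono) auto
    finally show "real CARD('d)^2 * (C k l * CV^2)
        \<le> lr_rate (real CARD('d)) CV \<Psi>_norm F_norm inv_mass_sup \<nu>_sup / 2 * F (\<rho> k l)" .
  next
    fix k assume "k \<in> L"
    then have k: "k \<in> \<Gamma>"
      using L by auto
    show "(\<Sum>j\<in>L. F (\<rho> k j)) \<le> \<bar>F_norm\<bar>"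
      by (rule F_sum_le[OF L k])
    have "\<bar>\<nu> k\<bar> \<le> \<bar>\<nu>_sup\<bar>" and "\<bar>1 / m k\<bar> \<le> \<bar>inv_mass_sup\<bar>"
      using cSUP_upper[OF k \<nu>_bdd] cSUP_upper[OF k inv_mass_bdd] m_\<nu>_pos k by fastforce+
    moreover have "(\<Sum>l\<in>L. real CARD('d)^2 * (C k l * CV^2)) \<le> (\<Sum>l\<in>L. P * F (\<rho> k l))"
      using coupling_le_F k L by (intro sum_mono) (auto simp: P_def)
    moreover have "(\<Sum>l\<in>L. P * F (\<rho> k l)) \<le> P * (\<bar>F_norm\<bar> + 1)"
      using F_sum_le[OF L k] \<open>0 \<le> P\<close> by (simp add: sum_distrib_left[symmetric] mult_left_mono)
    ultimately show "\<bar>\<nu> k\<bar> + \<bar>1 / m k\<bar> + (\<Sum>l\<in>L. real CARD('d)^2 * (C k l * CV^2))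
        \<le> lr_rate (real CARD('d)) CV \<Psi>_norm F_norm inv_mass_sup \<nu>_sup / 2 * F (\<rho> k k)"
      unfolding F_rho_self[OF k] half_rate mult_1_right by linarith
  qed (use assms CF_pos in \<open>auto simp: lr_rate_def\<close>)
qed

lemma poisson_bracket_bound:
  assumes "finite X" "finite Y" "\<forall>x\<in>X. \<forall>y\<in>Y. \<rho> x y > 0" "finite L" "L \<subseteq> \<Gamma>" "X \<union> Y \<subseteq> L"
    and f: "C1b_Omega X f" and g: "C1b_Omega Y g" and flow: "is_ham_flow L (hamiltonian L m \<nu> V) \<Phi>"
    and z: "z \<in> Omega L"
  defines "R \<equiv> sqrt (lr_constant (real CARD('d)) CV \<Psi>_norm F_norm CF inv_mass_sup \<nu>_sup)"
  shows "\<bar>poisson L (\<lambda>w. f (proj X (\<Phi> t w))) (\<lambda>w. g (proj Y w)) z\<bar>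
    \<le> 4 * C1_norm L (\<lambda>w. f (proj X w)) * C1_norm L (\<lambda>w. g (proj Y w)) * R * sinh (R * \<bar>t\<bar>)
      * (\<Sum>x\<in>X. \<Sum>y\<in>Y. F (\<rho> x y))"
proof -
  define \<kappa> where "\<kappa> = lr_rate (real CARD('d)) CV \<Psi>_norm F_norm inv_mass_sup \<nu>_sup"
  interpret lattice_system L m \<nu> V C CV \<Phi> "\<lambda>k l. F (\<rho> k l)" \<kappa> "\<bar>F_norm\<bar>" CF
    unfolding \<kappa>_def using sublattice_system assms by blast
  have XL: "X \<subseteq> L" and YL: "Y \<subseteq> L"
    using assms(6) by auto
  have "X \<inter> Y = {}"
  proof (rule ccontr)
    assume "X \<inter> Y \<noteq> {}"
    then obtain x where "x \<in> X" "x \<in> Y"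
      by blast
    moreover from this have "\<rho> x x = 0"
      using XL assms(5) metric by blast
    ultimately show False
      using assms(3) by fastforce
  qed
  define M where "M = 4 * C1_norm L (\<lambda>w. f (proj X w)) * C1_norm L (\<lambda>w. g (proj Y w))
      * (\<Sum>x\<in>X. \<Sum>y\<in>Y. F (\<rho> x y))"
  have "0 \<le> (\<Sum>x\<in>X. \<Sum>y\<in>Y. F (\<rho> x y))"
    using XL YL assms(5) by (intro sum_nonneg F_rho_nonneg) auto
  then have "0 \<le> M"
    unfolding M_def using C1_norm_bounds(3)[OF finite_L XL f] C1_norm_bounds(3)[OF finite_L YL g] by simp
  have "\<bar>poisson L (\<lambda>w. f (proj X (\<Phi> t w))) (\<lambda>w. g (proj Y w)) z\<bar>
      \<le> M * (real CARD('d)^2 / CF * (exp (\<kappa> * CF * \<bar>t\<bar>) - 1))"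
    using poisson_flow_bound[OF XL YL \<open>X \<inter> Y = {}\<close> f g z, of t] by (simp add: M_def algebra_simps)
  also have "\<dots> \<le> M * (R * sinh (R * \<bar>t\<bar>))"
    using \<open>0 \<le> M\<close> CF_pos \<kappa>_nonneg
    by (intro mult_left_mono exp_minus_1_le_sinh_scaled) (auto simp: R_def \<kappa>_def sqrt_lr_constant)
  finally show ?thesis
    by (simp add: M_def algebra_simps)
qed

lemma poisson_bracket_bound_exp:
  assumes "finite X" "finite Y" "\<forall>x\<in>X. \<forall>y\<in>Y. \<rho> x y > 0" "finite L" "L \<subseteq> \<Gamma>" "X \<union> Y \<subseteq> L"
    and f: "C1b_Omega X f" and g: "C1b_Omega Y g" and flow: "is_ham_flow L (hamiltonian L m \<nu> V) \<Phi>"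
    and z: "z \<in> Omega L"
  defines "R \<equiv> sqrt (lr_constant (real CARD('d)) CV \<Psi>_norm F_norm CF inv_mass_sup \<nu>_sup)"
  shows "\<bar>poisson L (\<lambda>w. f (proj X (\<Phi> t w))) (\<lambda>w. g (proj Y w)) z\<bar>
    \<le> 4 * C1_norm L (\<lambda>w. f (proj X w)) * C1_norm L (\<lambda>w. g (proj Y w)) * R * (exp (R * \<bar>t\<bar>) - 1)
      * (\<Sum>x\<in>X. \<Sum>y\<in>Y. F (\<rho> x y))"
proof -
  have XL: "X \<subseteq> L" and YL: "Y \<subseteq> L"
    using assms(6) by auto
  have "0 \<le> R"
    by (simp add: R_def less_imp_le[OF lr_constant_pos])
  then have "0 \<le> 4 * C1_norm L (\<lambda>w. f (proj X w)) * C1_norm L (\<lambda>w. g (proj Y w)) * R"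
    using C1_norm_bounds(3)[OF assms(4) XL f] C1_norm_bounds(3)[OF assms(4) YL g] by simp
  moreover have "sinh (R * \<bar>t\<bar>) \<le> exp (R * \<bar>t\<bar>) - 1"
    using \<open>0 \<le> R\<close> by (intro sinh_le_exp_minus_1) simp
  ultimately have "4 * C1_norm L (\<lambda>w. f (proj X w)) * C1_norm L (\<lambda>w. g (proj Y w)) * R * sinh (R * \<bar>t\<bar>)
      \<le> 4 * C1_norm L (\<lambda>w. f (proj X w)) * C1_norm L (\<lambda>w. g (proj Y w)) * R * (exp (R * \<bar>t\<bar>) - 1)"
    by (rule mult_left_mono[rotated])
  moreover have "0 \<le> (\<Sum>x\<in>X. \<Sum>y\<in>Y. F (\<rho> x y))"
    using XL YL assms(5) by (intro sum_nonneg F_rho_nonneg) auto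
  ultimately show ?thesis
    using poisson_bracket_bound[OF assms(1-10), of t] unfolding R_def
    by (meson mult_right_mono order_trans)
qed

end


theorem theorem3p9:
  "\<exists>C0 :: real \<Rightarrow> real \<Rightarrow> real \<Rightarrow> real \<Rightarrow> real \<Rightarrow> real \<Rightarrow> real.
   \<forall>(\<Gamma>::nat set) (\<rho>::nat \<Rightarrow> nat \<Rightarrow> real) (F::real \<Rightarrow> real) (CF::real)
    (m::nat \<Rightarrow> real) (\<nu>::nat \<Rightarrow> real) (V::nat \<Rightarrow> nat \<Rightarrow> real^'d::finite \<Rightarrow> real)
    (CV::real) (C::nat \<Rightarrow> nat \<Rightarrow> real).
   ((\<forall>x\<in>\<Gamma>. \<forall>y\<in>\<Gamma>. 0 \<le> \<rho> x y \<and> (\<rho> x y = 0 \<longleftrightarrow> x = y) \<and> \<rho> x y = \<rho> y x)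
    \<and> (\<forall>x\<in>\<Gamma>. \<forall>y\<in>\<Gamma>. \<forall>z\<in>\<Gamma>. \<rho> x z \<le> \<rho> x y + \<rho> y z)
    \<and> (\<forall>r\<ge>0. F r > 0) \<and> F 0 = 1 \<and> (\<forall>r s. 0 \<le> r \<longrightarrow> r \<le> s \<longrightarrow> F s \<le> F r)
    \<and> (\<forall>y\<in>\<Gamma>. (\<lambda>x. F (\<rho> x y)) summable_on \<Gamma>)
    \<and> bdd_above ((\<lambda>y. \<Sum>\<^sub>\<infinity>x\<in>\<Gamma>. F (\<rho> x y)) ` \<Gamma>)
    \<and> CF > 0
    \<and> (\<forall>x\<in>\<Gamma>. \<forall>y\<in>\<Gamma>. (\<lambda>z. F (\<rho> x z) * F (\<rho> z y)) summable_on \<Gamma>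
          \<and> (\<Sum>\<^sub>\<infinity>z\<in>\<Gamma>. F (\<rho> x z) * F (\<rho> z y)) \<le> CF * F (\<rho> x y))
    \<and> (\<forall>k\<in>\<Gamma>. m k > 0 \<and> \<nu> k > 0)
    \<and> (\<exists>c>0. \<forall>k\<in>\<Gamma>. c \<le> 1 / m k) \<and> bdd_above ((\<lambda>k. 1 / m k) ` \<Gamma>)
    \<and> (\<exists>c>0. \<forall>k\<in>\<Gamma>. c \<le> \<nu> k) \<and> bdd_above (\<nu> ` \<Gamma>)
    \<and> CV \<ge> 0
    \<and> (\<forall>k\<in>\<Gamma>. \<forall>l\<in>\<Gamma>. smooth_fun (V k l) \<and> (\<forall>x. V k l x = V l k (- x)) \<and> C k l > 0
          \<and> (\<forall>\<beta> x. \<bar>partial_iter \<beta> (V k l) x\<bar> \<le> C k l * CV ^ length \<beta>))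
    \<and> (\<forall>k\<in>\<Gamma>. V k k = (\<lambda>x. 0))
    \<and> bdd_above ((\<lambda>(k, l). C k l / F (\<rho> k l)) ` (\<Gamma> \<times> \<Gamma>)))
   \<longrightarrow>
   (let C0v = C0 CV (SUP (k, l)\<in>\<Gamma> \<times> \<Gamma>. C k l / F (\<rho> k l))
                 (SUP y\<in>\<Gamma>. \<Sum>\<^sub>\<infinity>x\<in>\<Gamma>. F (\<rho> x y)) CF
                 (SUP k\<in>\<Gamma>. 1 / m k) (SUP k\<in>\<Gamma>. \<nu> k)
    in C0v > 0 \<and>
     (\<forall>X Y L (f0 :: 'd phase \<Rightarrow> real) (g0 :: 'd phase \<Rightarrow> real) (\<Phi> :: real \<Rightarrow> 'd phase \<Rightarrow> 'd phase) t.
        finite X \<and> finite Y \<and> (\<forall>x\<in>X. \<forall>y\<in>Y. \<rho> x y > 0)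
        \<and> finite L \<and> L \<subseteq> \<Gamma> \<and> X \<union> Y \<subseteq> L
        \<and> C1b_Omega X f0 \<and> C1b_Omega Y g0
        \<and> is_ham_flow L (hamiltonian L m \<nu> V) \<Phi>
      \<longrightarrow>
        (let f = (\<lambda>z. f0 (proj X z)); g = (\<lambda>z. g0 (proj Y z));
             D = (\<Sum>x\<in>X. \<Sum>y\<in>Y. F (\<rho> x y))
         in \<forall>z\<in>Omega L.
              \<bar>poisson L (\<lambda>w. f (\<Phi> t w)) g z\<bar>
                \<le> 4 * C1_norm L f * C1_norm L g * sqrt C0v * sinh (sqrt C0v * \<bar>t\<bar>) * D
            \<and> \<bar>poisson L (\<lambda>w. f (\<Phi> t w)) g z\<bar>
                \<le> 4 * C1_norm L f * C1_norm L g * sqrt C0v * (exp (sqrt C0v * \<bar>t\<bar>) - 1) * D)))"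
  apply (intro exI[of _ "lr_constant (real CARD('d))"] allI impI)
  subgoal premises standing for \<Gamma> \<rho> F CF m \<nu> V CV C
  proof -
    interpret anharmonic_lattice \<Gamma> \<rho> F CF m \<nu> V CV C
      using standing by (elim conjE) (unfold_locales; assumption)
    show ?thesis
      unfolding Let_def
      by (intro conjI allI impI ballI lr_constant_pos; elim conjE)
        (rule poisson_bracket_bound poisson_bracket_bound_exp; assumption)+
  qed
  done

end
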